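(* For an integer $m\ge0$ let $\mathbf{S}_m=\{1,\dots,m\}^2$, and let $A_{\mathbf{S}}(m,k)$ be the number of $k$-element subsets of $\mathbf{S}_m$ such that no two distinct elements $(i,j),(i',j')$ satisfy $i=i'$ or $i-j=i'-j'$. For integers $k\ge0$ and $0\le d\le 2k$ define $$c_d(k)=\sum_{i=d}^{2k}\frac{(-1)^{i-d}}{i!}\left[{i\atop d}\right]\sum_{j=0}^{U(i,k)}\alpha(k,j)\sum_{p=L(i,k)}^{k-j}\left\{\!\!\left\{ {p+k-j \atop p}\right\}\!\!\right\}\sum_{b=0}^{j}\binom{p}{b}\binom{k}{j-b}\binom{b}{k+p-i},$$ where $\alpha(k,j)=2^{k-2j}\left[\binom{k-j}{j-1}+\binom{k-j+1}{j}\right]j!$, $U(i,k)=\min(\lceil k/2\rceil,2k-i)$ and $L(i,k)=\max(0,i-k)$. Then for all integers $m,k\ge0$, $A_{\mathbf{S}}(m,k)=\sum_{d=0}^{2k}c_d(k)\,m^d$.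
   Context: $\left[{i\atop d}\right]$ is the unsigned Stirling number of the first kind. $\left\{\!\!\left\{ {n \atop r}\right\}\!\!\right\}$ is the associated Stirling number of the second kind, defined for integers $n,r\ge0$ by $\left\{\!\!\left\{ {n \atop r}\right\}\!\!\right\}=r\left\{\!\!\left\{ {n-1 \atop r}\right\}\!\!\right\}+(n-1)\left\{\!\!\left\{ {n-2 \atop r-1}\right\}\!\!\right\}$ with $\left\{\!\!\left\{ {0 \atop r}\right\}\!\!\right\}=\delta_{r0}$, $\left\{\!\!\left\{ {1 \atop r}\right\}\!\!\right\}=0$, $\left\{\!\!\left\{ {n \atop 0}\right\}\!\!\right\}=\delta_{n0}$ (number of partitions of an $n$-set into $r$ blocks each of size at least 2). Binomial coefficients are extended to all integers (Kronenburg's convention): $\binom{n}{r}=n(n-1)\cdots(n-r+1)/r!$ if $r\ge0$; $\binom{n}{r}=(-1)^{n-r}\binom{-r-1}{n-r}$ if $r\le n<0$; $0$ otherwise (in particular $\binom{n}{r}=0$ for $n\ge0$, $r<0$). *)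

theory Defs
  imports Complex_Main "HOL-Combinatorics.Stirling"
begin

text \<open>Associated Stirling numbers of the second kind (blocks of size at least 2).\<close>
fun assoc_stirling :: "nat \<Rightarrow> nat \<Rightarrow> nat" where
  "assoc_stirling 0 r = (if r = 0 then 1 else 0)"
| "assoc_stirling (Suc 0) r = 0"
| "assoc_stirling (Suc (Suc n)) 0 = 0"
| "assoc_stirling (Suc (Suc n)) (Suc r) =
     Suc r * assoc_stirling (Suc n) (Suc r) + Suc n * assoc_stirling n r"

text \<open>Binomial coefficients extended to all integers (Kronenburg's convention).\<close>
definition kbinom :: "int \<Rightarrow> int \<Rightarrow> real" where
  "kbinom n r =
     (if 0 \<le> r then (real_of_int n) gchoose (nat r)
      else if r \<le> n \<and> n < 0 then (-1) ^ nat (n - r) * ((real_of_int (- r - 1)) gchoose (nat (n - r)))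
      else 0)"

definition S_board :: "nat \<Rightarrow> (int \<times> int) set" where
  "S_board m = {1..int m} \<times> {1..int m}"

definition A_S :: "nat \<Rightarrow> nat \<Rightarrow> nat" where
  "A_S m k = card {T. T \<subseteq> S_board m \<and> card T = k \<and>
     (\<forall>x\<in>T. \<forall>y\<in>T. x \<noteq> y \<longrightarrow>
        \<not> (fst x = fst y \<or> fst x - snd x = fst y - snd y))}"

definition alpha :: "int \<Rightarrow> int \<Rightarrow> real" where
  "alpha k j = 2 powi (k - 2 * j) * (kbinom (k - j) (j - 1) + kbinom (k - j + 1) j) * fact (nat j)"

definition U :: "int \<Rightarrow> int \<Rightarrow> int" where
  "U i k = min (\<lceil>real_of_int k / 2\<rceil>) (2 * k - i)"

definition L :: "int \<Rightarrow> int \<Rightarrow> int" where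
  "L i k = max 0 (i - k)"

definition c_coef :: "int \<Rightarrow> int \<Rightarrow> real" where
  "c_coef d k = (\<Sum>i\<in>{d..2*k}. (-1) ^ nat (i - d) / fact (nat i) * real (stirling (nat i) (nat d)) *
     (\<Sum>j\<in>{0..U i k}. alpha k j *
       (\<Sum>p\<in>{L i k..k - j}. real (assoc_stirling (nat (p + k - j)) (nat p)) *
         (\<Sum>b\<in>{0..j}. kbinom p b * kbinom k (j - b) * kbinom b (k + p - i)))))"

end

theory Submission
  imports Defs
begin

text \<open>
  The shear (i, j) \<mapsto> (i, i - j) turns the admissible k-sets into non-attacking rook
  placements: sets of k cells (r, d) with 1 \<le> r \<le> m and r - m \<le> d \<le> r - 1, no two in the
  same row r or the same column d. The cells with d \<ge> 0 and those with d < 0 form two Ferrers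
  boards, whose placements with prescribed row sets X and Y are counted row by row. This writes
  A_S(m, k) as a weighted sum over pairs of disjoint X, Y \<subseteq> {1..m}. Removing the smallest row
  gives a three-term recurrence in m, solved by a sum over j of binomial weights times
  S(m, m - k + j) (m - k + j)_j, with S the Stirling numbers of the second kind; summing the
  weights over |X| + |Y| = k produces alpha(k, j) / j!.

  On the other side, the Stirling numbers of the first kind convert the powers m^d into binomial
  coefficients C(m, i), two Vandermonde convolutions collapse the inner sums, and
  S(m, m - N) = \<Sum>p {{p + N, p}} C(m, p + N) identifies the result with the same expression.
\<close>

section \<open>Rook placements on boards with nested rows\<close>

definition rook_placements :: "'a set \<Rightarrow> ('a \<Rightarrow> 'b set) \<Rightarrow> ('a \<times> 'b) set set" where
  "rook_placements X D = {P. P \<subseteq> Sigma X D \<and> fst ` P = X \<and> inj_on fst P \<and> inj_on snd P}"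

lemma rook_placements_empty [simp]: "rook_placements {} D = {{}}"
  by (auto simp: rook_placements_def)

lemma finite_rook_placements:
  assumes "finite X" "\<And>r. r \<in> X \<Longrightarrow> finite (D r)"
  shows "finite (rook_placements X D)"
proof (rule finite_subset)
  show "rook_placements X D \<subseteq> Pow (Sigma X D)" by (auto simp: rook_placements_def)
  show "finite (Pow (Sigma X D))" using assms by auto
qed

lemma card_snd_rook_placement:
  assumes "P \<in> rook_placements X D"
  shows "card (snd ` P) = card X"
proof -
  have "inj_on fst P" "inj_on snd P" "fst ` P = X"
    using assms by (simp_all add: rook_placements_def)
  then show ?thesis by (metis card_image)
qed

lemma rook_placement_remove_row:
  assumes Q: "Q \<in> rook_placements (insert b X) D" and "b \<notin> X"
  obtains d where "(b, d) \<in> Q" "Q - {(b, d)} \<in> rook_placements X D" "d \<in> D b - snd ` (Q - {(b, d)})"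
proof -
  have Q_sub: "Q \<subseteq> Sigma (insert b X) D" and Q_rows: "fst ` Q = insert b X"
    and inj1: "inj_on fst Q" and inj2: "inj_on snd Q"
    using Q by (simp_all add: rook_placements_def)
  obtain d where bd: "(b, d) \<in> Q" using Q_rows by force
  have other_rows: "r \<noteq> b" if "(r, e) \<in> Q - {(b, d)}" for r e
    using that bd inj1 unfolding inj_on_def by (metis DiffE fst_conv singletonI)
  have "fst ` (Q - {(b, d)}) = X"
  proof
    show "fst ` (Q - {(b, d)}) \<subseteq> X"
    proof
      fix r assume "r \<in> fst ` (Q - {(b, d)})"
      then obtain e where "(r, e) \<in> Q - {(b, d)}" by force
      then have "r \<in> insert b X" "r \<noteq> b" using Q_rows other_rows by force+
      then show "r \<in> X" by simp
    qed
    show "X \<subseteq> fst ` (Q - {(b, d)})"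
    proof
      fix r assume "r \<in> X"
      then obtain e where "(r, e) \<in> Q" using Q_rows by force
      with \<open>r \<in> X\<close> \<open>b \<notin> X\<close> show "r \<in> fst ` (Q - {(b, d)})" by force
    qed
  qed
  moreover have "Q - {(b, d)} \<subseteq> Sigma X D"
    using Q_sub other_rows by fastforce
  ultimately have "Q - {(b, d)} \<in> rook_placements X D"
    using inj1 inj2 by (simp add: rook_placements_def inj_on_diff)
  moreover have "d \<in> D b - snd ` (Q - {(b, d)})"
    using Q_sub bd inj2 unfolding inj_on_def by fastforce
  ultimately show ?thesis using bd that by blast
qed

lemma rook_placements_insert:
  assumes "b \<notin> X"
  shows "bij_betw (\<lambda>(P, d). insert (b, d) P)
           (SIGMA P:rook_placements X D. D b - snd ` P) (rook_placements (insert b X) D)"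
proof (rule bij_betw_imageI)
  have no_b: "(b, e) \<notin> P" if "P \<in> rook_placements X D" for P e
    using that assms by (force simp: rook_placements_def)
  show "inj_on (\<lambda>(P, d). insert (b, d) P) (SIGMA P:rook_placements X D. D b - snd ` P)"
  proof (rule inj_onI, clarsimp)
    fix P d P' d'
    assume "P \<in> rook_placements X D" "P' \<in> rook_placements X D" and eq: "insert (b, d) P = insert (b, d') P'"
    with no_b have "d = d'" by (metis insertE insertI1 prod.inject)
    with no_b show "P = P' \<and> d = d'"
      using eq \<open>P \<in> rook_placements X D\<close> \<open>P' \<in> rook_placements X D\<close> by (metis insert_ident)
  qed
  show "(\<lambda>(P, d). insert (b, d) P) ` (SIGMA P:rook_placements X D. D b - snd ` P)
      = rook_placements (insert b X) D"
  proof
    show "(\<lambda>(P, d). insert (b, d) P) ` (SIGMA P:rook_placements X D. D b - snd ` P)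
        \<subseteq> rook_placements (insert b X) D"
    proof clarify
      fix P d assume P: "P \<in> rook_placements X D" and d: "d \<in> D b" "d \<notin> snd ` P"
      have "b \<notin> fst ` P" using P assms by (auto simp: rook_placements_def)
      with P d show "insert (b, d) P \<in> rook_placements (insert b X) D"
        by (auto simp: rook_placements_def)
    qed
    show "rook_placements (insert b X) D
        \<subseteq> (\<lambda>(P, d). insert (b, d) P) ` (SIGMA P:rook_placements X D. D b - snd ` P)"
    proof
      fix Q assume "Q \<in> rook_placements (insert b X) D"
      then obtain d where bd: "(b, d) \<in> Q" and "Q - {(b, d)} \<in> rook_placements X D"
          "d \<in> D b - snd ` (Q - {(b, d)})"
        using assms by (rule rook_placement_remove_row)
      then have "(Q - {(b, d)}, d) \<in> (SIGMA P:rook_placements X D. D b - snd ` P)" by simp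
      moreover have "Q = (\<lambda>(P, d). insert (b, d) P) (Q - {(b, d)}, d)" using bd by auto
      ultimately show "Q \<in> (\<lambda>(P, d). insert (b, d) P) ` (SIGMA P:rook_placements X D. D b - snd ` P)"
        by (simp only: image_eqI)
    qed
  qed
qed

lemma card_rook_placements_insert:
  assumes "b \<notin> X" "finite X" and fin: "\<And>r. r \<in> insert b X \<Longrightarrow> finite (D r)"
    and sub: "\<And>r. r \<in> X \<Longrightarrow> D r \<subseteq> D b"
  shows "card (rook_placements (insert b X) D) = card (rook_placements X D) * (card (D b) - card X)"
proof -
  have "card (rook_placements (insert b X) D) = card (SIGMA P:rook_placements X D. D b - snd ` P)"
    by (rule bij_betw_same_card[OF rook_placements_insert[OF \<open>b \<notin> X\<close>], symmetric])
  also have "\<dots> = (\<Sum>P\<in>rook_placements X D. card (D b - snd ` P))"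
    using assms by (intro card_SigmaI finite_rook_placements) auto
  also have "\<dots> = (\<Sum>P\<in>rook_placements X D. card (D b) - card X)"
  proof (rule sum.cong[OF refl])
    fix P assume P: "P \<in> rook_placements X D"
    then have "snd ` P \<subseteq> D b" using sub by (force simp: rook_placements_def)
    then show "card (D b - snd ` P) = card (D b) - card X"
      using fin card_snd_rook_placement[OF P] by (simp add: card_Diff_subset finite_subset)
  qed
  finally show ?thesis by simp
qed

lemma card_rook_placements_mono:
  fixes X :: "'a::linorder set"
  assumes "finite X" "\<And>r. r \<in> X \<Longrightarrow> finite (D r)"
    and "\<And>r s. r \<in> X \<Longrightarrow> s \<in> X \<Longrightarrow> s \<le> r \<Longrightarrow> D s \<subseteq> D r"
  shows "card (rook_placements X D) = (\<Prod>r\<in>X. card (D r) - card {s\<in>X. s < r})"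
  using assms
proof (induction X rule: finite_linorder_max_induct)
  case (insert b X)
  have "b \<notin> X" using insert.hyps(2) by auto
  have "D r \<subseteq> D b" if "r \<in> X" for r
    using insert.prems(2)[of b r] insert.hyps(2) that by (simp add: less_imp_le)
  then have "card (rook_placements (insert b X) D)
      = (card (D b) - card X) * (\<Prod>r\<in>X. card (D r) - card {s\<in>X. s < r})"
    using insert \<open>b \<notin> X\<close> card_rook_placements_insert[of b X D] by (simp add: mult.commute)
  moreover have "{s \<in> insert b X. s < b} = X" "\<And>r. r \<in> X \<Longrightarrow> {s \<in> insert b X. s < r} = {s \<in> X. s < r}"
    using insert.hyps(2) by auto
  ultimately show ?case
    by (simp only: prod.insert[OF insert.hyps(1) \<open>b \<notin> X\<close>] cong: prod.cong)
qed simp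

lemma card_rook_placements_antimono:
  fixes X :: "'a::linorder set"
  assumes "finite X" "\<And>r. r \<in> X \<Longrightarrow> finite (D r)"
    and "\<And>r s. r \<in> X \<Longrightarrow> s \<in> X \<Longrightarrow> r \<le> s \<Longrightarrow> D s \<subseteq> D r"
  shows "card (rook_placements X D) = (\<Prod>r\<in>X. card (D r) - card {s\<in>X. r < s})"
  using assms
proof (induction X rule: finite_linorder_min_induct)
  case (insert b X)
  have "b \<notin> X" using insert.hyps(2) by auto
  have "D r \<subseteq> D b" if "r \<in> X" for r
    using insert.prems(2)[of b r] insert.hyps(2) that by (simp add: less_imp_le)
  then have "card (rook_placements (insert b X) D)
      = (card (D b) - card X) * (\<Prod>r\<in>X. card (D r) - card {s\<in>X. r < s})"
    using insert \<open>b \<notin> X\<close> card_rook_placements_insert[of b X D] by (simp add: mult.commute)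
  moreover have "{s \<in> insert b X. b < s} = X" "\<And>r. r \<in> X \<Longrightarrow> {s \<in> insert b X. r < s} = {s \<in> X. r < s}"
    using insert.hyps(2) by auto
  ultimately show ?case
    by (simp only: prod.insert[OF insert.hyps(1) \<open>b \<notin> X\<close>] cong: prod.cong)
qed simp

section \<open>From non-attacking sets to weighted pairs of row sets\<close>

definition shear :: "int \<times> int \<Rightarrow> int \<times> int" where
  "shear = (\<lambda>(i, j). (i, i - j))"

lemma shear_shear [simp]: "shear (shear p) = p"
  by (cases p) (simp add: shear_def)

lemma inj_shear: "inj shear"
  by (metis injI shear_shear)

definition sheared_board :: "nat \<Rightarrow> (int \<times> int) set" where
  "sheared_board m = Sigma {1..int m} (\<lambda>r. {r - int m..r - 1})"

definition sheared_placements :: "nat \<Rightarrow> nat \<Rightarrow> (int \<times> int) set set" where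
  "sheared_placements m k = {P. P \<subseteq> sheared_board m \<and> card P = k \<and> inj_on fst P \<and> inj_on snd P}"

lemma shear_image_mem_sheared_placements_iff:
  "shear ` T \<in> sheared_placements m k \<longleftrightarrow> T \<subseteq> S_board m \<and> card T = k \<and>
     (\<forall>x\<in>T. \<forall>y\<in>T. x \<noteq> y \<longrightarrow> \<not> (fst x = fst y \<or> fst x - snd x = fst y - snd y))"
proof -
  have fst_shear: "fst (shear p) = fst p" and snd_shear: "snd (shear p) = fst p - snd p" for p
    by (cases p; simp add: shear_def)+
  have "shear ` T \<subseteq> sheared_board m \<longleftrightarrow> T \<subseteq> S_board m"
    by (auto simp: shear_def sheared_board_def S_board_def)
  moreover have "card (shear ` T) = card T"
    using inj_shear by (simp add: card_image inj_on_subset)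
  moreover have "inj_on fst (shear ` T) \<longleftrightarrow> inj_on fst T"
    using comp_inj_on_iff[OF inj_on_subset[OF inj_shear], of T fst] by (simp add: comp_def fst_shear)
  moreover have "inj_on snd (shear ` T) \<longleftrightarrow> inj_on (\<lambda>p. fst p - snd p) T"
    using comp_inj_on_iff[OF inj_on_subset[OF inj_shear], of T snd] by (simp add: comp_def snd_shear)
  moreover have "inj_on fst T \<and> inj_on (\<lambda>p. fst p - snd p) T \<longleftrightarrow>
      (\<forall>x\<in>T. \<forall>y\<in>T. x \<noteq> y \<longrightarrow> \<not> (fst x = fst y \<or> fst x - snd x = fst y - snd y))"
    unfolding inj_on_def by blast
  ultimately show ?thesis by (simp add: sheared_placements_def)
qed

lemma A_S_eq_card_sheared_placements: "A_S m k = card (sheared_placements m k)"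
proof -
  define TS where "TS = {T. T \<subseteq> S_board m \<and> card T = k \<and>
     (\<forall>x\<in>T. \<forall>y\<in>T. x \<noteq> y \<longrightarrow> \<not> (fst x = fst y \<or> fst x - snd x = fst y - snd y))}"
  have "sheared_placements m k = (\<lambda>T. shear ` T) ` TS"
  proof (intro equalityI subsetI)
    fix P assume "P \<in> sheared_placements m k"
    then have "shear ` P \<in> TS" "P = shear ` (shear ` P)"
      using shear_image_mem_sheared_placements_iff[of "shear ` P"] by (simp_all add: TS_def image_image)
    then show "P \<in> (\<lambda>T. shear ` T) ` TS" by blast
  qed (use shear_image_mem_sheared_placements_iff in \<open>auto simp: TS_def\<close>)
  moreover have "inj_on (\<lambda>T. shear ` T) TS"
    by (rule inj_onI) (simp add: inj_image_eq_iff[OF inj_shear])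
  ultimately show ?thesis by (simp add: A_S_def TS_def card_image)
qed

definition cells_nonneg :: "int \<Rightarrow> int set" where
  "cells_nonneg r = {0..r - 1}"

definition cells_neg :: "nat \<Rightarrow> int \<Rightarrow> int set" where
  "cells_neg m r = {r - int m..-1}"

definition row_splits :: "'a set \<Rightarrow> nat \<Rightarrow> ('a set \<times> 'a set) set" where
  "row_splits I k = {(X, Y). X \<subseteq> I \<and> Y \<subseteq> I \<and> X \<inter> Y = {} \<and> card X + card Y = k}"

lemma finite_row_splits: "finite I \<Longrightarrow> finite (row_splits I k)"
  by (rule finite_subset[of _ "Pow I \<times> Pow I"]) (auto simp: row_splits_def)

lemma sheared_placement_Un:
  assumes XY: "(X, Y) \<in> row_splits {1..int m} k"
    and PL: "PL \<in> rook_placements X cells_nonneg" and PR: "PR \<in> rook_placements Y (cells_neg m)"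
  shows "PL \<union> PR \<in> sheared_placements m k"
proof -
  have X: "X \<subseteq> {1..int m}" and Y: "Y \<subseteq> {1..int m}" and "X \<inter> Y = {}" and "card X + card Y = k"
    using XY by (auto simp: row_splits_def)
  have PL_sub: "PL \<subseteq> Sigma X cells_nonneg" and "fst ` PL = X" "inj_on fst PL" "inj_on snd PL"
    using PL by (auto simp: rook_placements_def)
  have PR_sub: "PR \<subseteq> Sigma Y (cells_neg m)" and "fst ` PR = Y" "inj_on fst PR" "inj_on snd PR"
    using PR by (auto simp: rook_placements_def)
  have "finite PL" "finite PR"
    using X Y \<open>fst ` PL = X\<close> \<open>fst ` PR = Y\<close> finite_subset
    by (metis finite_atLeastAtMost_int finite_imageD \<open>inj_on fst PL\<close> \<open>inj_on fst PR\<close>)+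
  have snd_disj: "snd ` PL \<inter> snd ` PR = {}"
    using PL_sub PR_sub by (force simp: cells_nonneg_def cells_neg_def)
  then have "PL \<inter> PR = {}" by auto
  moreover have "card PL = card X" "card PR = card Y"
    using \<open>fst ` PL = X\<close> \<open>fst ` PR = Y\<close> \<open>inj_on fst PL\<close> \<open>inj_on fst PR\<close> by (metis card_image)+
  ultimately have "card (PL \<union> PR) = k"
    using \<open>finite PL\<close> \<open>finite PR\<close> \<open>card X + card Y = k\<close> by (simp add: card_Un_disjoint)
  moreover have "PL \<union> PR \<subseteq> sheared_board m"
    using PL_sub PR_sub X Y by (force simp: sheared_board_def cells_nonneg_def cells_neg_def)
  moreover have "inj_on fst (PL \<union> PR)" "inj_on snd (PL \<union> PR)"
    using snd_disj \<open>X \<inter> Y = {}\<close> \<open>fst ` PL = X\<close> \<open>fst ` PR = Y\<close> \<open>inj_on fst PL\<close> \<open>inj_on fst PR\<close>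
      \<open>inj_on snd PL\<close> \<open>inj_on snd PR\<close> by (auto simp: inj_on_Un)
  ultimately show ?thesis by (simp add: sheared_placements_def)
qed

lemma sheared_placement_split:
  assumes P: "P \<in> sheared_placements m k"
  defines "PL \<equiv> {p\<in>P. 0 \<le> snd p}" and "PR \<equiv> {p\<in>P. snd p < 0}"
  shows "(fst ` PL, fst ` PR) \<in> row_splits {1..int m} k"
    and "PL \<in> rook_placements (fst ` PL) cells_nonneg"
    and "PR \<in> rook_placements (fst ` PR) (cells_neg m)"
proof -
  have sub: "P \<subseteq> sheared_board m" and "card P = k" and inj1: "inj_on fst P" and inj2: "inj_on snd P"
    using P by (auto simp: sheared_placements_def)
  have "finite P" using sub finite_subset by (fastforce simp: sheared_board_def)
  have "card (fst ` PL) + card (fst ` PR) = card PL + card PR"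
    using inj1 by (simp add: PL_def PR_def card_image inj_on_subset)
  also have "\<dots> = card P"
    using \<open>finite P\<close> by (subst card_Un_disjoint[symmetric]) (auto simp: PL_def PR_def intro: arg_cong[of _ _ card])
  finally have "card (fst ` PL) + card (fst ` PR) = k" using \<open>card P = k\<close> by simp
  moreover have "fst ` PL \<inter> fst ` PR = {}"
  proof -
    have "p = q" if "p \<in> PL" "q \<in> PR" "fst p = fst q" for p q
      using that inj1 by (auto simp: PL_def PR_def dest: inj_onD)
    then show ?thesis by (force simp: PL_def PR_def)
  qed
  moreover have "fst ` PL \<subseteq> {1..int m}" "fst ` PR \<subseteq> {1..int m}"
    using sub by (auto simp: PL_def PR_def sheared_board_def)
  ultimately show "(fst ` PL, fst ` PR) \<in> row_splits {1..int m} k"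
    by (simp add: row_splits_def)
  have "PL \<subseteq> Sigma (fst ` PL) cells_nonneg"
  proof
    fix p assume "p \<in> PL"
    then have "p \<in> sheared_board m" "0 \<le> snd p" using sub by (auto simp: PL_def)
    then have "snd p \<in> cells_nonneg (fst p)" by (auto simp: sheared_board_def cells_nonneg_def)
    then show "p \<in> Sigma (fst ` PL) cells_nonneg" using \<open>p \<in> PL\<close> by (metis SigmaI imageI prod.collapse)
  qed
  moreover have "inj_on fst PL" "inj_on snd PL"
    using inj1 inj2 by (auto simp: PL_def intro: inj_on_subset)
  ultimately show "PL \<in> rook_placements (fst ` PL) cells_nonneg"
    by (simp add: rook_placements_def)
  have "PR \<subseteq> Sigma (fst ` PR) (cells_neg m)"
  proof
    fix p assume "p \<in> PR"
    then have "p \<in> sheared_board m" "snd p < 0" using sub by (auto simp: PR_def)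
    then have "snd p \<in> cells_neg m (fst p)" by (auto simp: sheared_board_def cells_neg_def)
    then show "p \<in> Sigma (fst ` PR) (cells_neg m)" using \<open>p \<in> PR\<close> by (metis SigmaI imageI prod.collapse)
  qed
  moreover have "inj_on fst PR" "inj_on snd PR"
    using inj1 inj2 by (auto simp: PR_def intro: inj_on_subset)
  ultimately show "PR \<in> rook_placements (fst ` PR) (cells_neg m)"
    by (simp add: rook_placements_def)
qed

lemma card_sheared_placements:
  "card (sheared_placements m k) = (\<Sum>(X, Y)\<in>row_splits {1..int m} k.
     card (rook_placements X cells_nonneg) * card (rook_placements Y (cells_neg m)))"
proof -
  define G where "G = (SIGMA XY:row_splits {1..int m} k.
    rook_placements (fst XY) cells_nonneg \<times> rook_placements (snd XY) (cells_neg m))"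
  define join :: "(int set \<times> int set) \<times> (int \<times> int) set \<times> (int \<times> int) set \<Rightarrow> (int \<times> int) set"
    where "join = (\<lambda>(_, (PL, PR)). PL \<union> PR)"
  define split where "split P = ((fst ` {p\<in>P. 0 \<le> snd p}, fst ` {p\<in>P. snd p < 0}),
    ({p\<in>P. 0 \<le> snd p}, {p\<in>P. snd p < 0}))" for P :: "(int \<times> int) set"
  have "bij_betw join G (sheared_placements m k)"
  proof (rule bij_betw_byWitness[where f' = split])
    show "\<forall>a\<in>G. split (join a) = a"
    proof
      fix a assume "a \<in> G"
      then obtain X Y PL PR where a: "a = ((X, Y), (PL, PR))"
        and PL: "PL \<in> rook_placements X cells_nonneg" and PR: "PR \<in> rook_placements Y (cells_neg m)"
        by (auto simp: G_def)
      then have "{p \<in> PL \<union> PR. 0 \<le> snd p} = PL" "{p \<in> PL \<union> PR. snd p < 0} = PR"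
        by (force simp: rook_placements_def cells_nonneg_def cells_neg_def)+
      moreover have "fst ` PL = X" "fst ` PR = Y" using PL PR by (simp_all add: rook_placements_def)
      ultimately show "split (join a) = a" by (simp add: a split_def join_def)
    qed
    show "\<forall>P\<in>sheared_placements m k. join (split P) = P"
      by (auto simp: join_def split_def)
    show "join ` G \<subseteq> sheared_placements m k"
      by (auto simp: G_def join_def intro: sheared_placement_Un)
    show "split ` sheared_placements m k \<subseteq> G"
      by (auto simp: G_def split_def dest: sheared_placement_split)
  qed
  then have "card (sheared_placements m k) = card G"
    by (simp add: bij_betw_same_card)
  also have "\<dots> = (\<Sum>XY\<in>row_splits {1..int m} k.
      card (rook_placements (fst XY) cells_nonneg \<times> rook_placements (snd XY) (cells_neg m)))"
    unfolding G_def by (intro card_SigmaI finite_row_splits) (auto simp: row_splits_def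
        cells_nonneg_def cells_neg_def intro!: finite_rook_placements finite_cartesian_product
        dest: finite_subset)
  finally show ?thesis by (simp add: card_cartesian_product case_prod_beta)
qed

lemma card_below_split:
  assumes "X \<subseteq> I" "finite I"
  shows "card {s\<in>I. P s} = card {s\<in>X. P s} + card {s\<in>I - X. P s}"
proof -
  have "{s\<in>I. P s} = {s\<in>X. P s} \<union> {s\<in>I - X. P s}" using assms by auto
  then show ?thesis using assms by (simp add: card_Un_disjoint[symmetric] finite_subset Int_def)
qed

lemma card_rook_placements_cells_nonneg:
  assumes X: "X \<subseteq> {1..int m}"
  shows "card (rook_placements X cells_nonneg) = (\<Prod>r\<in>X. 1 + card {s\<in>{1..int m} - X. s < r})"
proof -
  have "card (rook_placements X cells_nonneg) = (\<Prod>r\<in>X. card (cells_nonneg r) - card {s\<in>X. s < r})"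
    using X by (intro card_rook_placements_mono) (auto simp: cells_nonneg_def finite_subset)
  also have "\<dots> = (\<Prod>r\<in>X. 1 + card {s\<in>{1..int m} - X. s < r})"
  proof (rule prod.cong[OF refl])
    fix r assume "r \<in> X"
    then have "{s\<in>{1..int m}. s < r} = {1..r - 1}" using X by auto
    then have "nat r - 1 = card {s\<in>X. s < r} + card {s\<in>{1..int m} - X. s < r}"
      using card_below_split[OF X, of "\<lambda>s. s < r"] by simp
    moreover have "card (cells_nonneg r) = nat r" "1 \<le> r" using \<open>r \<in> X\<close> X by (auto simp: cells_nonneg_def)
    ultimately show "card (cells_nonneg r) - card {s\<in>X. s < r} = 1 + card {s\<in>{1..int m} - X. s < r}"
      by linarith
  qed
  finally show ?thesis .
qed

lemma card_rook_placements_cells_neg: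
  assumes Y: "Y \<subseteq> {1..int m}"
  shows "card (rook_placements Y (cells_neg m)) = (\<Prod>r\<in>Y. card {s\<in>{1..int m} - Y. r < s})"
proof -
  have "card (rook_placements Y (cells_neg m)) = (\<Prod>r\<in>Y. card (cells_neg m r) - card {s\<in>Y. r < s})"
    using Y by (intro card_rook_placements_antimono) (auto simp: cells_neg_def finite_subset)
  also have "\<dots> = (\<Prod>r\<in>Y. card {s\<in>{1..int m} - Y. r < s})"
  proof (rule prod.cong[OF refl])
    fix r assume "r \<in> Y"
    then have "{s\<in>{1..int m}. r < s} = {r + 1..int m}" using Y by auto
    then have "nat (int m - r) = card {s\<in>Y. r < s} + card {s\<in>{1..int m} - Y. r < s}"
      using card_below_split[OF Y, of "\<lambda>s. r < s"] by simp
    moreover have "card (cells_neg m r) = nat (int m - r)" by (simp add: cells_neg_def)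
    ultimately show "card (cells_neg m r) - card {s\<in>Y. r < s} = card {s\<in>{1..int m} - Y. r < s}"
      by linarith
  qed
  finally show ?thesis .
qed

definition pair_weight :: "'a::linorder set \<Rightarrow> nat \<Rightarrow> 'a set \<Rightarrow> 'a set \<Rightarrow> nat" where
  "pair_weight I x X Y = (\<Prod>r\<in>X. x + card {s\<in>I - X. s < r}) * (\<Prod>r\<in>Y. card {s\<in>I - Y. r < s})"

definition disjoint_pairs :: "'a set \<Rightarrow> nat \<Rightarrow> nat \<Rightarrow> ('a set \<times> 'a set) set" where
  "disjoint_pairs I a b = {(X, Y). X \<subseteq> I \<and> Y \<subseteq> I \<and> X \<inter> Y = {} \<and> card X = a \<and> card Y = b}"

definition pair_weight_sum :: "'a::linorder set \<Rightarrow> nat \<Rightarrow> nat \<Rightarrow> nat \<Rightarrow> nat" where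
  "pair_weight_sum I x a b = (\<Sum>(X, Y)\<in>disjoint_pairs I a b. pair_weight I x X Y)"

lemma finite_disjoint_pairs: "finite I \<Longrightarrow> finite (disjoint_pairs I a b)"
  by (rule finite_subset[of _ "Pow I \<times> Pow I"]) (auto simp: disjoint_pairs_def)

lemma sum_row_splits:
  assumes "finite I"
  shows "(\<Sum>(X, Y)\<in>row_splits I k. f X Y) = (\<Sum>a\<le>k. \<Sum>(X, Y)\<in>disjoint_pairs I a (k - a). f X Y)"
proof -
  have "(\<Sum>(X, Y)\<in>row_splits I k. f X Y) = (\<Sum>a\<le>k. \<Sum>XY\<in>{XY\<in>row_splits I k. card (fst XY) = a}. case_prod f XY)"
    using assms by (intro sum.group[symmetric] finite_row_splits) (auto simp: row_splits_def)
  also have "\<dots> = (\<Sum>a\<le>k. \<Sum>(X, Y)\<in>disjoint_pairs I a (k - a). f X Y)"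
    by (intro sum.cong refl arg_cong[where f = "sum _"]) (auto simp: row_splits_def disjoint_pairs_def)
  finally show ?thesis .
qed

lemma A_S_eq_sum_pair_weight_sum:
  "A_S m k = (\<Sum>a\<le>k. pair_weight_sum {1..int m} 1 a (k - a))"
proof -
  have "A_S m k = (\<Sum>(X, Y)\<in>row_splits {1..int m} k. pair_weight {1..int m} 1 X Y)"
    unfolding A_S_eq_card_sheared_placements card_sheared_placements
    by (intro sum.cong refl) (auto simp: row_splits_def pair_weight_def
        card_rook_placements_cells_nonneg card_rook_placements_cells_neg)
  then show ?thesis by (simp add: sum_row_splits pair_weight_sum_def)
qed

section \<open>A recurrence for the weighted pair sums\<close>

lemma disjoint_pairs_insert_left:
  assumes "finite I" "lo \<notin> I"
  shows "bij_betw (\<lambda>(X, Y). (insert lo X, Y)) (disjoint_pairs I a b)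
           {(X, Y)\<in>disjoint_pairs (insert lo I) (Suc a) b. lo \<in> X}"
proof -
  have fin: "finite X" and lo: "lo \<notin> X" if "X \<subseteq> I" for X
    using that assms finite_subset by auto
  show ?thesis
    by (rule bij_betw_byWitness[where f' = "(\<lambda>(X, Y). (X - {lo}, Y))"])
      (use assms in \<open>auto simp: disjoint_pairs_def fin lo card_insert_disjoint\<close>)
qed

lemma disjoint_pairs_insert_right:
  assumes "finite I" "lo \<notin> I"
  shows "bij_betw (\<lambda>(X, Y). (X, insert lo Y)) (disjoint_pairs I a b)
           {(X, Y)\<in>disjoint_pairs (insert lo I) a (Suc b). lo \<in> Y}"
proof -
  have fin: "finite X" and lo: "lo \<notin> X" if "X \<subseteq> I" for X
    using that assms finite_subset by auto
  show ?thesis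
    by (rule bij_betw_byWitness[where f' = "(\<lambda>(X, Y). (X, Y - {lo}))"])
      (use assms in \<open>auto simp: disjoint_pairs_def fin lo card_insert_disjoint\<close>)
qed

lemma sum_disjoint_pairs_insert:
  assumes "finite I" "lo \<notin> I"
  shows "(\<Sum>(X, Y)\<in>disjoint_pairs (insert lo I) a b. f X Y) =
       (\<Sum>(X, Y)\<in>disjoint_pairs I a b. f X Y)
     + (if a = 0 then 0 else \<Sum>(X, Y)\<in>disjoint_pairs I (a - 1) b. f (insert lo X) Y)
     + (if b = 0 then 0 else \<Sum>(X, Y)\<in>disjoint_pairs I a (b - 1). f X (insert lo Y))"
proof -
  define S1 where "S1 = {(X, Y)\<in>disjoint_pairs (insert lo I) a b. lo \<in> X}"
  define S2 where "S2 = {(X, Y)\<in>disjoint_pairs (insert lo I) a b. lo \<in> Y}"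
  have "disjoint_pairs (insert lo I) a b = disjoint_pairs I a b \<union> (S1 \<union> S2)"
    using assms by (auto simp: disjoint_pairs_def S1_def S2_def)
  moreover have "disjoint_pairs I a b \<inter> (S1 \<union> S2) = {}" "S1 \<inter> S2 = {}"
    using assms by (auto simp: disjoint_pairs_def S1_def S2_def)
  moreover have "finite S1" "finite S2"
    unfolding S1_def S2_def
    by (rule finite_subset[OF _ finite_disjoint_pairs[of "insert lo I"]], use assms in auto)+
  ultimately have split: "(\<Sum>(X, Y)\<in>disjoint_pairs (insert lo I) a b. f X Y) =
      (\<Sum>(X, Y)\<in>disjoint_pairs I a b. f X Y) + (\<Sum>(X, Y)\<in>S1. f X Y) + (\<Sum>(X, Y)\<in>S2. f X Y)"
    using assms by (simp add: sum.union_disjoint finite_disjoint_pairs add.assoc)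
  have "(\<Sum>(X, Y)\<in>S1. f X Y) = (if a = 0 then 0 else \<Sum>(X, Y)\<in>disjoint_pairs I (a - 1) b. f (insert lo X) Y)"
  proof (cases a)
    case 0
    then have "S1 = {}" using assms by (auto simp: S1_def disjoint_pairs_def dest: finite_subset)
    then show ?thesis using 0 by simp
  next
    case (Suc a')
    then show ?thesis
      using sum.reindex_bij_betw[OF disjoint_pairs_insert_left[OF assms, of a' b], of "case_prod f"]
      by (simp add: S1_def case_prod_beta)
  qed
  moreover have "(\<Sum>(X, Y)\<in>S2. f X Y) = (if b = 0 then 0 else \<Sum>(X, Y)\<in>disjoint_pairs I a (b - 1). f X (insert lo Y))"
  proof (cases b)
    case 0
    then have "S2 = {}" using assms by (auto simp: S2_def disjoint_pairs_def dest: finite_subset)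
    then show ?thesis using 0 by simp
  next
    case (Suc b')
    then show ?thesis
      using sum.reindex_bij_betw[OF disjoint_pairs_insert_right[OF assms, of a b'], of "case_prod f"]
      by (simp add: S2_def case_prod_beta)
  qed
  ultimately show ?thesis using split by simp
qed

context
  fixes I :: "'a::linorder set" and lo :: 'a and X Y :: "'a set"
  assumes fin: "finite I" and lo_min: "\<forall>s\<in>I. lo < s" and XY: "X \<subseteq> I" "Y \<subseteq> I"
begin

private lemma lo_notin: "lo \<notin> I" "lo \<notin> X" "lo \<notin> Y"
  using lo_min XY by auto

private lemma below_insert_min: "r \<in> X \<Longrightarrow> {s\<in>insert lo I - X. s < r} = insert lo {s\<in>I - X. s < r}"
  using lo_min XY lo_notin by auto

private lemma above_insert_min: "r \<in> Y \<Longrightarrow> {s\<in>insert lo I - Y. r < s} = {s\<in>I - Y. r < s}"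
  using lo_min XY by (auto simp: subset_iff) (meson not_less_iff_gr_or_eq)

lemma pair_weight_insert_min:
  "pair_weight (insert lo I) x X Y = pair_weight I (Suc x) X Y"
proof -
  have "finite {s\<in>I - X. s < r}" for r using fin by simp
  then have "x + card {s\<in>insert lo I - X. s < r} = Suc x + card {s\<in>I - X. s < r}" if "r \<in> X" for r
    using below_insert_min[OF that] lo_notin by simp
  then show ?thesis
    using above_insert_min by (simp add: pair_weight_def cong: prod.cong)
qed

lemma pair_weight_insert_min_left:
  "pair_weight (insert lo I) x (insert lo X) Y = x * pair_weight I x X Y"
proof -
  have "finite X" using XY fin finite_subset by auto
  have none_below: "{s\<in>I - X. s < lo} = {}" using lo_min by auto
  have "{s\<in>insert lo I - insert lo X. s < r} = {s\<in>I - X. s < r}" for r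
    using lo_notin by auto
  then have "pair_weight (insert lo I) x (insert lo X) Y =
      (\<Prod>r\<in>insert lo X. x + card {s\<in>I - X. s < r}) * (\<Prod>r\<in>Y. card {s\<in>I - Y. r < s})"
    unfolding pair_weight_def by (simp only: above_insert_min cong: prod.cong)
  also have "\<dots> = (x + card {s\<in>I - X. s < lo}) *
      (\<Prod>r\<in>X. x + card {s\<in>I - X. s < r}) * (\<Prod>r\<in>Y. card {s\<in>I - Y. r < s})"
    by (simp only: prod.insert[OF \<open>finite X\<close> lo_notin(2)])
  also have "\<dots> = x * pair_weight I x X Y"
    unfolding none_below by (simp add: pair_weight_def)
  finally show ?thesis .
qed

lemma pair_weight_insert_min_right:
  "pair_weight (insert lo I) x X (insert lo Y) = (card I - card Y) * pair_weight I (Suc x) X Y"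
proof -
  have "finite {s\<in>I - X. s < r}" for r using fin by simp
  then have "x + card {s\<in>insert lo I - X. s < r} = Suc x + card {s\<in>I - X. s < r}" if "r \<in> X" for r
    using below_insert_min[OF that] lo_notin by simp
  moreover have "{s\<in>insert lo I - insert lo Y. lo < s} = I - Y" using lo_min by auto
  moreover have "{s\<in>insert lo I - insert lo Y. r < s} = {s\<in>I - Y. r < s}" if "r \<in> Y" for r
    using that lo_notin by auto
  moreover have "finite Y" "card (I - Y) = card I - card Y"
    using XY fin by (auto simp: card_Diff_subset finite_subset)
  ultimately show ?thesis
    using lo_notin by (simp add: pair_weight_def ac_simps cong: prod.cong)
qed

end

lemma pair_weight_sum_insert_min:
  assumes fin: "finite I" and lo_min: "\<forall>s\<in>I. lo < s"
  shows "pair_weight_sum (insert lo I) x a b = pair_weight_sum I (Suc x) a b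
     + (if a = 0 then 0 else x * pair_weight_sum I x (a - 1) b)
     + (if b = 0 then 0 else (card I - (b - 1)) * pair_weight_sum I (Suc x) a (b - 1))"
proof -
  have lo: "lo \<notin> I" using lo_min by auto
  have none: "(\<Sum>(X, Y)\<in>disjoint_pairs I a b. pair_weight (insert lo I) x X Y) = pair_weight_sum I (Suc x) a b"
    unfolding pair_weight_sum_def using fin lo_min
    by (intro sum.cong refl) (auto simp: disjoint_pairs_def pair_weight_insert_min)
  have left: "(\<Sum>(X, Y)\<in>disjoint_pairs I a' b. pair_weight (insert lo I) x (insert lo X) Y)
      = x * pair_weight_sum I x a' b" for a'
    unfolding pair_weight_sum_def sum_distrib_left using fin lo_min
    by (intro sum.cong refl) (auto simp: disjoint_pairs_def pair_weight_insert_min_left)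
  have right: "(\<Sum>(X, Y)\<in>disjoint_pairs I a b'. pair_weight (insert lo I) x X (insert lo Y))
      = (card I - b') * pair_weight_sum I (Suc x) a b'" for b'
    unfolding pair_weight_sum_def sum_distrib_left using fin lo_min
    by (intro sum.cong refl) (auto simp: disjoint_pairs_def pair_weight_insert_min_right)
  show ?thesis
    unfolding pair_weight_sum_def[of "insert lo I"] sum_disjoint_pairs_insert[OF fin lo] none left right ..
qed

fun weight_rec :: "nat \<Rightarrow> nat \<Rightarrow> int \<Rightarrow> int \<Rightarrow> int" where
  "weight_rec 0 x a b = (if a = 0 \<and> b = 0 then 1 else 0)"
| "weight_rec (Suc n) x a b = (if a < 0 \<or> b < 0 then 0 else
     weight_rec n (Suc x) a b + int x * weight_rec n x (a - 1) b
       + (int n + 1 - b) * weight_rec n (Suc x) a (b - 1))"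

lemma weight_rec_neg: "a < 0 \<or> b < 0 \<Longrightarrow> weight_rec n x a b = 0"
  by (cases n) auto

lemma pair_weight_sum_eq_weight_rec:
  "finite I \<Longrightarrow> int (pair_weight_sum I x a b) = weight_rec (card I) x (int a) (int b)"
proof (induction I arbitrary: x a b rule: finite_linorder_min_induct)
  case empty
  show ?case
  proof (cases "a = 0 \<and> b = 0")
    case True
    then have "disjoint_pairs ({} :: 'a set) a b = {({}, {})}" by (auto simp: disjoint_pairs_def)
    then show ?thesis using True by (simp add: pair_weight_sum_def pair_weight_def)
  next
    case False
    then have "disjoint_pairs ({} :: 'a set) a b = {}" by (auto simp: disjoint_pairs_def)
    then show ?thesis using False by (simp add: pair_weight_sum_def)
  qed
next
  case (insert lo I)
  have "lo \<notin> I" using insert.hyps(2) by auto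
  have left: "int (if a = 0 then 0 else x * pair_weight_sum I x (a - 1) b)
      = int x * weight_rec (card I) x (int a - 1) (int b)"
    by (cases a) (simp_all add: insert.IH weight_rec_neg)
  have right: "int (if b = 0 then 0 else (card I - (b - 1)) * pair_weight_sum I (Suc x) a (b - 1))
      = (int (card I) + 1 - int b) * weight_rec (card I) (Suc x) (int a) (int b - 1)"
  proof (cases b)
    case (Suc b')
    show ?thesis
    proof (cases "b' \<le> card I")
      case False
      then have "disjoint_pairs I a b' = {}"
        by (auto simp: disjoint_pairs_def dest: card_mono[OF insert.hyps(1)])
      then have "pair_weight_sum I (Suc x) a b' = 0" by (simp add: pair_weight_sum_def)
      then show ?thesis using Suc insert.IH[of "Suc x" a b'] by simp
    qed (use Suc insert.IH[of "Suc x" a b'] in \<open>simp add: of_nat_diff\<close>)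
  qed (simp add: weight_rec_neg)
  show ?case
    using pair_weight_sum_insert_min[OF insert.hyps, of x a b] insert.IH[of "Suc x" a b] left right
      \<open>lo \<notin> I\<close> insert.hyps(1) by simp
qed

section \<open>Closed form of the recurrence\<close>

definition falling_fact :: "nat \<Rightarrow> nat \<Rightarrow> nat" where
  "falling_fact z j = (z choose j) * fact j"

lemma falling_fact_0 [simp]: "falling_fact z 0 = 1"
  by (simp add: falling_fact_def)

lemma falling_fact_Suc_Suc: "falling_fact (Suc z) (Suc j) = falling_fact z (Suc j) + Suc j * falling_fact z j"
  by (simp add: falling_fact_def algebra_simps)

lemma falling_fact_Suc: "falling_fact z (Suc j) = (z - j) * falling_fact z j"
proof -
  have h: "Suc j * (z choose Suc j) = (z - j) * (z choose j)"
    by (metis binomial_absorb_comp binomial_absorption)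
  have "falling_fact z (Suc j) = (Suc j * (z choose Suc j)) * fact j"
    unfolding falling_fact_def fact_Suc by (simp only: ac_simps of_nat_id)
  also have "\<dots> = (z - j) * falling_fact z j" unfolding h falling_fact_def by (simp only: ac_simps)
  finally show ?thesis .
qed

lemma falling_fact_eq_0: "z < j \<Longrightarrow> falling_fact z j = 0" by (simp add: falling_fact_def)

definition stirling_ffact :: "nat \<Rightarrow> int \<Rightarrow> int \<Rightarrow> int" where
  "stirling_ffact n N j = (if 0 \<le> N \<and> N \<le> int n \<and> 0 \<le> j then
      int (Stirling n (n - nat N) * falling_fact (n - nat N) (nat j)) else 0)"

lemma stirling_ffact_0: "stirling_ffact 0 N j = (if N = 0 \<and> j = 0 then 1 else 0)"
  by (auto simp: stirling_ffact_def falling_fact_def)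

lemma stirling_ffact_eq_0_large: "j > int n \<Longrightarrow> stirling_ffact n N j = 0"
  by (auto simp: stirling_ffact_def falling_fact_eq_0)

lemma stirling_ffact_eq_0_neg: "N < 0 \<Longrightarrow> stirling_ffact n N j = 0"
  by (auto simp: stirling_ffact_def)

lemma stirling_ffact_shift: assumes j0: "0 \<le> j" shows "stirling_ffact n N (j+1) = (int n - N - j) * stirling_ffact n N j"
proof (cases "0 \<le> N \<and> N \<le> int n \<and> 0 \<le> j")
  case True
  then obtain jn where jn: "j = int jn" by (metis nonneg_eq_int)
  have "nat (j+1) = Suc jn" using jn by simp
  moreover have e: "int (falling_fact (n - nat N) (Suc jn)) = (int n - N - j) * int (falling_fact (n - nat N) jn)"
  proof (cases "jn \<le> n - nat N")
    case True
    have "int (n - nat N - jn) = int n - N - j" using True \<open>0 \<le> N \<and> N \<le> int n \<and> 0 \<le> j\<close> jn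
      by linarith
    then show ?thesis by (simp add: falling_fact_Suc)
  next
    case False
    then show ?thesis by (simp add: falling_fact_eq_0)
  qed
  ultimately show ?thesis using True jn by (simp add: stirling_ffact_def mult_ac)
next
  case False
  then show ?thesis using j0
    by (auto simp: stirling_ffact_def)
qed

lemma Stirling_falling_fact_Suc:
  "Stirling (Suc n) (Suc z) * falling_fact (Suc z) j = Suc z * (Stirling n (Suc z) * falling_fact (Suc z) j)
     + Stirling n z * falling_fact z j + j * (Stirling n z * falling_fact z (j - 1))"
  by (cases j) (simp_all add: falling_fact_Suc_Suc algebra_simps)

lemma stirling_ffact_Suc:
  "stirling_ffact (Suc n) N j
     = stirling_ffact n N j + (int n + 1 - N) * stirling_ffact n (N - 1) j + j * stirling_ffact n N (j - 1)"
proof (cases "0 \<le> j \<and> 0 \<le> N \<and> N \<le> int n")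
  case True
  define z where "z = n - nat N"
  obtain J where J: "j = int J" using True by (metis nonneg_eq_int)
  have "Suc n - nat N = Suc z" using True unfolding z_def by linarith
  then have lhs: "stirling_ffact (Suc n) N j = int (Stirling (Suc n) (Suc z) * falling_fact (Suc z) J)"
    using True J by (simp add: stirling_ffact_def del: Stirling.simps)
  have prev: "stirling_ffact n (N - 1) j = int (Stirling n (Suc z) * falling_fact (Suc z) J)"
  proof (cases "N = 0")
    case False
    then have "n - nat (N - 1) = Suc z" using True unfolding z_def by linarith
    then show ?thesis using True J False by (simp add: stirling_ffact_def)
  qed (simp add: stirling_ffact_def z_def)
  have same: "stirling_ffact n N j = int (Stirling n z * falling_fact z J)"
    using True J by (simp add: stirling_ffact_def z_def)
  have lower: "j * stirling_ffact n N (j - 1) = int (J * (Stirling n z * falling_fact z (J - 1)))"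
  proof (cases "J = 0")
    case False
    then have "nat (j - 1) = J - 1" "0 \<le> j - 1" using J by auto
    then show ?thesis using True J by (simp add: stirling_ffact_def z_def)
  qed (simp add: J)
  have coeff: "int n + 1 - N = int (Suc z)" using True unfolding z_def by linarith
  show ?thesis
    unfolding lhs prev same lower coeff Stirling_falling_fact_Suc by (simp only: of_nat_add of_nat_mult ac_simps)
next
  case False
  then consider "j < 0" | "N < 0" | "N = int n + 1" | "int n + 1 < N" by linarith
  then show ?thesis by cases (simp_all add: stirling_ffact_def)
qed

definition binom_weight :: "nat \<Rightarrow> int \<Rightarrow> int \<Rightarrow> int \<Rightarrow> int" where
  "binom_weight x a b j = (if 0 \<le> b \<and> 0 \<le> j \<and> j \<le> a then
      int ((nat (a+b-j) choose nat (a-j)) * ((x + nat b) choose nat j)) else 0)"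

lemma binom_weight_nat: "binom_weight x (int A) (int B) (int J) = (if J \<le> A then
      int ((A+B-J choose (A-J)) * ((x + B) choose J)) else 0)"
  by (auto simp: binom_weight_def nat_diff_distrib nat_add_distrib)

lemma binom_weight_eq_0_neg: "j < 0 \<Longrightarrow> binom_weight x a b j = 0" by (simp add: binom_weight_def)
lemma binom_weight_eq_0_large: "j > a \<Longrightarrow> binom_weight x a b j = 0" by (simp add: binom_weight_def)

lemma binom_weight_pascal:
  assumes a0: "0 \<le> a" and b0: "0 \<le> b" and j0: "0 \<le> j" and jk: "j \<le> a + b"
  shows "binom_weight x a b j + binom_weight x a b (j-1) = binom_weight (Suc x) a b j + binom_weight (Suc x) a (b-1) (j-1)"
proof -
  obtain A B J where AB: "a = int A" "b = int B" "j = int J"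
    using a0 b0 j0 by (metis nonneg_eq_int)
  show ?thesis
  proof (cases J)
    case 0
    then show ?thesis using AB binom_weight_nat[of _ A B 0] by (simp add: binom_weight_eq_0_neg)
  next
    case (Suc J')
    have jm1: "j - 1 = int J'" using AB Suc by simp
    show ?thesis
    proof (cases "J \<le> A")
      case True
      then obtain M where M: "A = M + 1 + J'" using Suc by (metis add.commute add_Suc le_iff_add plus_1_eq_Suc)
      have e1: "binom_weight x a b j = int ((M+B choose M) * (x+B choose Suc J'))"
        unfolding AB Suc by (subst binom_weight_nat) (simp add: M)
      have e2: "binom_weight x a b (j-1) = int ((Suc (M+B) choose Suc M) * (x+B choose J'))"
        unfolding jm1 AB(1,2) by (subst binom_weight_nat) (simp add: M)
      have e3: "binom_weight (Suc x) a b j = int ((M+B choose M) * (Suc (x+B) choose Suc J'))"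
        unfolding AB Suc by (subst binom_weight_nat) (simp add: M)
      have e4: "binom_weight (Suc x) a (b-1) (j-1) = int ((M+B choose Suc M) * (x+B choose J'))"
      proof (cases B)
        case 0
        then show ?thesis using AB by (simp add: binom_weight_def)
      next
        case (Suc B')
        have hb: "b - 1 = int B'" using AB Suc by simp
        show ?thesis unfolding jm1 AB(1) hb by (subst binom_weight_nat) (simp add: M Suc)
      qed
      show ?thesis unfolding e1 e2 e3 e4 by (simp add: algebra_simps)
    next
      case False
      then have "binom_weight x a b j = 0" "binom_weight (Suc x) a b j = 0" using AB by (auto simp: binom_weight_eq_0_large)
      moreover have "binom_weight x a b (j-1) = binom_weight (Suc x) a (b-1) (j-1)"
      proof (cases "J = Suc A")
        case True
        then have "B \<ge> 1" using jk AB by simp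
        then obtain B' where B': "B = Suc B'" by (cases B) auto
        have JA: "J' = A" using True Suc by simp
        have hb: "b - 1 = int B'" using AB B' by simp
        have h1: "binom_weight x a b (j-1) = int (x + B choose A)"
          unfolding jm1 AB(1,2) JA by (subst binom_weight_nat) simp
        have h2: "binom_weight (Suc x) a (b-1) (j-1) = int (x + B choose A)"
          unfolding jm1 AB(1) hb JA by (subst binom_weight_nat) (simp add: B')
        show ?thesis unfolding h1 h2 ..
      next
        case False
        then have "J' > A" using \<open>\<not> J \<le> A\<close> Suc by simp
        then show ?thesis using AB jm1 by (simp add: binom_weight_eq_0_large)
      qed
      ultimately show ?thesis by simp
    qed
  qed
qed

lemma of_nat_choose_Suc_absorb:
  "(int k + 1) * int (n choose Suc k) = (int n - int k) * int (n choose k)"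
proof (cases "k \<le> n")
  case True
  have "Suc k * (n choose Suc k) = (n - k) * (n choose k)"
    by (metis binomial_absorb_comp binomial_absorption)
  then show ?thesis using True by (metis of_nat_Suc of_nat_diff of_nat_mult add.commute)
qed (simp add: binomial_eq_0)

lemma binom_weight_absorption:
  assumes a0: "0 \<le> a" and b0: "0 \<le> b" and j0: "0 \<le> j" and jk: "j \<le> a + b - 1"
  shows "j * binom_weight x a b j + (j+1) * binom_weight x a b (j+1) = int x * binom_weight x (a-1) b j + a * binom_weight (Suc x) a (b-1) j"
proof -
  obtain A B J where AB: "a = int A" "b = int B" "j = int J"
    using a0 b0 j0 by (metis nonneg_eq_int)
  have jp1: "j + 1 = int (Suc J)" using AB by simp
  show ?thesis
  proof (cases "J < A")
    case True
    then obtain M where M: "A = M + 1 + J" by (metis add.commute add_Suc less_iff_Suc_add plus_1_eq_Suc)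
    have am1: "a - 1 = int (M + J)" using AB M by simp
    define n' where "n' = x + B"
    have e1: "binom_weight x a b j = int ((Suc (M+B) choose Suc M) * (n' choose J))"
      unfolding AB by (subst binom_weight_nat) (simp add: M n'_def)
    have e2: "binom_weight x a b (j+1) = int ((M+B choose M) * (n' choose Suc J))"
      unfolding jp1 AB(1,2) by (subst binom_weight_nat) (simp add: M n'_def)
    have e3: "binom_weight x (a-1) b j = int ((M+B choose M) * (n' choose J))"
      unfolding am1 AB(2,3) by (subst binom_weight_nat) (simp add: M n'_def)
    have e4: "binom_weight (Suc x) a (b-1) j = int ((M+B choose Suc M) * (n' choose J))"
    proof (cases B)
      case 0
      then show ?thesis using AB by (simp add: binom_weight_def)
    next
      case (Suc B')
      have hb: "b - 1 = int B'" using AB Suc by simp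
      show ?thesis unfolding AB(1,3) hb by (subst binom_weight_nat) (simp add: M Suc n'_def)
    qed
    have k1i: "(int J + 1) * int (n' choose Suc J) = (int n' - int J) * int (n' choose J)"
      by (rule of_nat_choose_Suc_absorb)
    have k2i: "(int M + 1) * int (M+B choose Suc M) = int B * int (M+B choose M)"
      using of_nat_choose_Suc_absorb[of M "M + B"] by simp
    have "j * binom_weight x a b j + (j+1) * binom_weight x a b (j+1)
        = int J * int (M+B choose M) * int (n' choose J) + int J * int (M+B choose Suc M) * int (n' choose J)
          + int (M+B choose M) * ((int J + 1) * int (n' choose Suc J))"
      unfolding e1 e2 using AB by (simp add: algebra_simps)
    also have "\<dots> = int n' * int (M+B choose M) * int (n' choose J) + int J * int (M+B choose Suc M) * int (n' choose J)"
      unfolding k1i by (simp add: algebra_simps)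
    also have "\<dots> = int x * int (M+B choose M) * int (n' choose J) + (int B * int (M+B choose M)) * int (n' choose J)
         + int J * int (M+B choose Suc M) * int (n' choose J)"
      by (simp add: n'_def algebra_simps)
    also have "\<dots> = int x * binom_weight x (a-1) b j + a * binom_weight (Suc x) a (b-1) j"
      unfolding e3 e4 k2i[symmetric] using AB M by (simp add: algebra_simps)
    finally show ?thesis .
  next
    case False
    show ?thesis
    proof (cases "J = A")
      case True
      then have "B \<ge> 1" using jk AB by simp
      then obtain B' where B': "B = Suc B'" by (cases B) auto
      have hb: "b - 1 = int B'" using AB B' by simp
      have h1: "binom_weight x a b j = int (x + B choose A)"
        unfolding AB True by (subst binom_weight_nat) simp
      have h2: "binom_weight (Suc x) a (b-1) j = int (x + B choose A)"
        unfolding AB(1,3) hb True by (subst binom_weight_nat) (simp add: B')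
      have h3: "binom_weight x a b (j+1) = 0" "binom_weight x (a-1) b j = 0" using AB True by (simp_all add: binom_weight_eq_0_large)
      show ?thesis unfolding h1 h2 h3 using AB True by simp
    next
      case False
      then show ?thesis using AB \<open>\<not> J < A\<close> by (simp add: binom_weight_eq_0_large)
    qed
  qed
qed

lemma sum_shift_int:
  fixes f :: "int \<Rightarrow> 'a::comm_monoid_add"
  assumes "lo \<le> hi + 1" "f lo = 0" "f (hi+1) = 0"
  shows "(\<Sum>j\<in>{lo..hi}. f (j+1)) = (\<Sum>j\<in>{lo..hi}. f j)"
proof -
  have "(\<Sum>j\<in>{lo..hi}. f (j+1)) = (\<Sum>j\<in>(\<lambda>j. j+1) ` {lo..hi}. f j)"
    by (subst sum.reindex) (auto simp: inj_on_def)
  also have "(\<lambda>j. j+1) ` {lo..hi} = {lo+1..hi+1}"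
    by (rule set_eqI) (auto simp: image_iff)
  finally have e1: "(\<Sum>j\<in>{lo..hi}. f (j+1)) = (\<Sum>j\<in>{lo+1..hi+1}. f j)" .
  have s1: "{lo..hi+1} = insert lo {lo+1..hi+1}" using assms(1) by auto
  have s2: "{lo..hi+1} = insert (hi+1) {lo..hi}" using assms(1) by auto
  have "(\<Sum>j\<in>{lo..hi+1}. f j) = f lo + (\<Sum>j\<in>{lo+1..hi+1}. f j)"
    unfolding s1 by (subst sum.insert) auto
  moreover have "(\<Sum>j\<in>{lo..hi+1}. f j) = f (hi+1) + (\<Sum>j\<in>{lo..hi}. f j)"
    unfolding s2 by (subst sum.insert) auto
  ultimately show ?thesis using e1 assms(2,3) by simp
qed

lemma stirling_ffact_Suc_sum:
  fixes w :: "int \<Rightarrow> int"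
  assumes "w (-1) = 0"
  shows "(\<Sum>j\<in>{0..int (Suc n)}. (w j + w (j - 1)) * stirling_ffact n (k - j) j
            + (j * w j + (j + 1) * w (j + 1)) * stirling_ffact n (k - 1 - j) j)
       = (\<Sum>j\<in>{0..int (Suc n)}. w j * stirling_ffact (Suc n) (k - j) j)"
proof -
  define P where "P j = stirling_ffact n (k - j) j" for j
  define Q where "Q j = stirling_ffact n (k - 1 - j) j" for j
  have PQ: "P (j + 1) = (int n + 1 - k) * Q j" if "0 \<le> j" for j
    using stirling_ffact_shift[OF that, of n "k - 1 - j"] by (simp add: P_def Q_def algebra_simps)
  have P_large: "P j = 0" and Q_large: "Q j = 0" if "j > int n" for j
    using that by (simp_all add: P_def Q_def stirling_ffact_eq_0_large)
  have "(\<Sum>j\<in>{0..int (Suc n)}. w ((j + 1) - 1) * P (j + 1)) = (\<Sum>j\<in>{0..int (Suc n)}. w (j - 1) * P j)"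
    by (rule sum_shift_int) (auto simp: assms P_large)
  moreover have "(\<Sum>j\<in>{0..int (Suc n)}. ((j + 1) - 1 + 1) * w ((j + 1) - 1 + 1) * Q ((j + 1) - 1)) =
      (\<Sum>j\<in>{0..int (Suc n)}. (j - 1 + 1) * w (j - 1 + 1) * Q (j - 1))"
    by (rule sum_shift_int) (auto simp: Q_large)
  ultimately have "(\<Sum>j\<in>{0..int (Suc n)}. (w j + w (j - 1)) * P j + (j * w j + (j + 1) * w (j + 1)) * Q j)
      = (\<Sum>j\<in>{0..int (Suc n)}. w j * (P j + P (j + 1) + j * Q j + j * Q (j - 1)))"
    by (simp add: sum.distrib algebra_simps)
  also have "\<dots> = (\<Sum>j\<in>{0..int (Suc n)}. w j * stirling_ffact (Suc n) (k - j) j)"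
  proof (rule sum.cong[OF refl])
    fix j assume "j \<in> {0..int (Suc n)}"
    then have "stirling_ffact (Suc n) (k - j) j = P j + (int n + 1 - (k - j)) * Q j + j * Q (j - 1)"
      unfolding stirling_ffact_Suc P_def Q_def by (simp add: algebra_simps)
    also have "\<dots> = P j + P (j + 1) + j * Q j + j * Q (j - 1)"
      using PQ[of j] \<open>j \<in> {0..int (Suc n)}\<close> by (simp add: algebra_simps)
    finally show "w j * (P j + P (j + 1) + j * Q j + j * Q (j - 1)) = w j * stirling_ffact (Suc n) (k - j) j"
      by simp
  qed
  finally show ?thesis by (simp add: P_def Q_def)
qed

lemma binom_weight_recurrence_sum:
  assumes "0 \<le> a" "0 \<le> b" and J: "J \<subseteq> {0..}"
    and P: "\<And>j. a + b < j \<Longrightarrow> P j = 0" and Q: "\<And>j. a + b - 1 < j \<Longrightarrow> Q j = 0"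
  shows "(\<Sum>j\<in>J. (binom_weight (Suc x) a b j + binom_weight (Suc x) a (b - 1) (j - 1)) * P j
            + (int x * binom_weight x (a - 1) b j + a * binom_weight (Suc x) a (b - 1) j) * Q j)
       = (\<Sum>j\<in>J. (binom_weight x a b j + binom_weight x a b (j - 1)) * P j
            + (j * binom_weight x a b j + (j + 1) * binom_weight x a b (j + 1)) * Q j)"
proof (rule sum.cong[OF refl])
  fix j assume "j \<in> J"
  then have "0 \<le> j" using J by auto
  have "(binom_weight (Suc x) a b j + binom_weight (Suc x) a (b - 1) (j - 1)) * P j
      = (binom_weight x a b j + binom_weight x a b (j - 1)) * P j"
    using binom_weight_pascal[OF assms(1,2) \<open>0 \<le> j\<close>, of x] P[of j] by (cases "j \<le> a + b") auto
  moreover have "(int x * binom_weight x (a - 1) b j + a * binom_weight (Suc x) a (b - 1) j) * Q j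
      = (j * binom_weight x a b j + (j + 1) * binom_weight x a b (j + 1)) * Q j"
    using binom_weight_absorption[OF assms(1,2) \<open>0 \<le> j\<close>, of x] Q[of j] by (cases "j \<le> a + b - 1") auto
  ultimately show "(binom_weight (Suc x) a b j + binom_weight (Suc x) a (b - 1) (j - 1)) * P j
        + (int x * binom_weight x (a - 1) b j + a * binom_weight (Suc x) a (b - 1) j) * Q j
      = (binom_weight x a b j + binom_weight x a b (j - 1)) * P j
        + (j * binom_weight x a b j + (j + 1) * binom_weight x a b (j + 1)) * Q j"
    by linarith
qed

lemma weight_rec_closed_form:
  "weight_rec n x a b = (\<Sum>j\<in>{0..int n}. binom_weight x a b j * stirling_ffact n (a + b - j) j)"
proof (induction n arbitrary: x a b)
  case 0
  show ?case by (auto simp: stirling_ffact_0 binom_weight_def)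
next
  case (Suc n)
  show ?case
  proof (cases "a < 0 \<or> b < 0")
    case True
    then show ?thesis by (auto intro!: sum.neutral simp: binom_weight_def)
  next
    case False
    then have "0 \<le> a" "0 \<le> b" by auto
    define P where "P j = stirling_ffact n (a + b - j) j" for j
    define Q where "Q j = stirling_ffact n (a + b - 1 - j) j" for j
    define wb where "wb j = binom_weight (Suc x) a (b - 1) j" for j
    have P_large: "P j = 0" if "j > int n \<or> j > a + b" for j
      using that by (auto simp: P_def stirling_ffact_eq_0_large stirling_ffact_eq_0_neg)
    have Q_large: "Q j = 0" if "j > int n \<or> j > a + b - 1" for j
      using that by (auto simp: Q_def stirling_ffact_eq_0_large stirling_ffact_eq_0_neg)
    have shift: "(int n + 1 - b) * Q j = P (j + 1) + a * Q j" if "0 \<le> j" for j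
      using stirling_ffact_shift[OF that, of n "a + b - 1 - j"] by (simp add: P_def Q_def algebra_simps)
    have "weight_rec (Suc n) x a b = (\<Sum>j\<in>{0..int n}. binom_weight (Suc x) a b j * P j)
        + int x * (\<Sum>j\<in>{0..int n}. binom_weight x (a - 1) b j * Q j)
        + (int n + 1 - b) * (\<Sum>j\<in>{0..int n}. wb j * Q j)"
      using \<open>0 \<le> a\<close> \<open>0 \<le> b\<close> by (simp add: Suc.IH P_def Q_def wb_def algebra_simps)
    also have "\<dots> = (\<Sum>j\<in>{0..int n}. binom_weight (Suc x) a b j * P j
        + wb j * ((int n + 1 - b) * Q j) + int x * binom_weight x (a - 1) b j * Q j)"
      unfolding sum_distrib_left sum.distrib[symmetric] by (rule sum.cong) (simp_all add: algebra_simps)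
    also have "\<dots> = (\<Sum>j\<in>{0..int n}. binom_weight (Suc x) a b j * P j
        + wb j * P (j + 1) + (int x * binom_weight x (a - 1) b j + a * wb j) * Q j)"
    proof (rule sum.cong[OF refl])
      fix j :: int assume "j \<in> {0..int n}"
      then have e: "(int n + 1 - b) * Q j = P (j + 1) + a * Q j" using shift by simp
      show "binom_weight (Suc x) a b j * P j + wb j * ((int n + 1 - b) * Q j)
          + int x * binom_weight x (a - 1) b j * Q j = binom_weight (Suc x) a b j * P j
          + wb j * P (j + 1) + (int x * binom_weight x (a - 1) b j + a * wb j) * Q j"
        unfolding e by (simp add: algebra_simps)
    qed
    also have "\<dots> = (\<Sum>j\<in>{0..int (Suc n)}. (binom_weight (Suc x) a b j + wb (j - 1)) * P j
        + (int x * binom_weight x (a - 1) b j + a * wb j) * Q j)"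
    proof -
      have "(\<Sum>j\<in>{0..int n}. wb ((j + 1) - 1) * P (j + 1)) = (\<Sum>j\<in>{0..int n}. wb (j - 1) * P j)"
        by (rule sum_shift_int) (auto simp: wb_def binom_weight_eq_0_neg P_large)
      moreover have "{0..int (Suc n)} = insert (int n + 1) {0..int n}" by auto
      ultimately show ?thesis by (simp add: sum.distrib algebra_simps P_large Q_large)
    qed
    also have "\<dots> = (\<Sum>j\<in>{0..int (Suc n)}. (binom_weight x a b j + binom_weight x a b (j - 1)) * P j
        + (j * binom_weight x a b j + (j + 1) * binom_weight x a b (j + 1)) * Q j)"
      unfolding wb_def using \<open>0 \<le> a\<close> \<open>0 \<le> b\<close> P_large Q_large
      by (intro binom_weight_recurrence_sum) auto
    also have "\<dots> = (\<Sum>j\<in>{0..int (Suc n)}. binom_weight x a b j * stirling_ffact (Suc n) (a + b - j) j)"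
      unfolding P_def Q_def by (rule stirling_ffact_Suc_sum) (simp add: binom_weight_def)
    finally show ?thesis .
  qed
qed

section \<open>Associated Stirling numbers\<close>

lemma assoc_stirling_eq_0: "n < 2 * r \<Longrightarrow> assoc_stirling n r = 0"
  by (induction n r rule: assoc_stirling.induct) auto

lemma assoc_stirling_Suc_0: "assoc_stirling (Suc n) 0 = 0"
  by (cases n) auto

definition assoc_stirling_sum :: "nat \<Rightarrow> nat \<Rightarrow> nat" where
  "assoc_stirling_sum m N = (\<Sum>p\<le>N. assoc_stirling (p+N) p * (m choose (p+N)))"

lemma assoc_stirling_sum_0_right: "assoc_stirling_sum m 0 = 1" by (simp add: assoc_stirling_sum_def)

lemma assoc_stirling_sum_0_left: "assoc_stirling_sum 0 N = (if N = 0 then 1 else 0)"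
  by (auto simp: assoc_stirling_sum_def)

lemma choose_absorb_add:
  "p * (m choose (p + N)) + m * ((m - 1) choose (p + N)) = (m - N) * (m choose (p + N))"
proof (cases "p + N \<le> m")
  case True
  then have "p + (m - (p + N)) = m - N" by simp
  then show ?thesis by (metis add_mult_distrib binomial_absorb_comp)
qed (simp add: binomial_eq_0)

lemma assoc_stirling_sum_Suc_Suc:
  "assoc_stirling_sum (Suc m) (Suc N) = assoc_stirling_sum m (Suc N) + (m - N) * assoc_stirling_sum m N"
proof -
  have "assoc_stirling_sum (Suc m) (Suc N)
      = assoc_stirling_sum m (Suc N) + (\<Sum>p\<le>Suc N. assoc_stirling (p + Suc N) p * (m choose (p + N)))"
    by (simp add: assoc_stirling_sum_def sum.distrib algebra_simps)
  also have "(\<Sum>p\<le>Suc N. assoc_stirling (p + Suc N) p * (m choose (p + N)))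
      = (\<Sum>p\<le>N. assoc_stirling (Suc p + Suc N) (Suc p) * (m choose (Suc p + N)))"
    by (subst sum.atMost_Suc_shift) (simp add: assoc_stirling_Suc_0)
  also have "\<dots> = (\<Sum>p\<le>N. Suc p * assoc_stirling (Suc p + N) (Suc p) * (m choose (Suc p + N)))
      + (\<Sum>p\<le>N. assoc_stirling (p + N) p * (Suc (p + N) * (m choose Suc (p + N))))"
    by (simp add: sum.distrib algebra_simps)
  also have "(\<Sum>p\<le>N. Suc p * assoc_stirling (Suc p + N) (Suc p) * (m choose (Suc p + N)))
      = (\<Sum>p\<le>N. p * assoc_stirling (p + N) p * (m choose (p + N)))"
    using sum.atMost_Suc_shift[of "\<lambda>p. p * assoc_stirling (p + N) p * (m choose (p + N))" N]
      assoc_stirling_eq_0[of "Suc N + N" "Suc N"] by simp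
  also have "(\<Sum>p\<le>N. assoc_stirling (p + N) p * (Suc (p + N) * (m choose Suc (p + N))))
      = (\<Sum>p\<le>N. assoc_stirling (p + N) p * (m * ((m - 1) choose (p + N))))"
    by (simp only: binomial_absorption)
  also have "(\<Sum>p\<le>N. p * assoc_stirling (p + N) p * (m choose (p + N)))
      + (\<Sum>p\<le>N. assoc_stirling (p + N) p * (m * ((m - 1) choose (p + N))))
      = (m - N) * assoc_stirling_sum m N"
    unfolding assoc_stirling_sum_def sum_distrib_left sum.distrib[symmetric]
  proof (rule sum.cong[OF refl])
    fix p
    have "p * assoc_stirling (p + N) p * (m choose (p + N)) + assoc_stirling (p + N) p * (m * ((m - 1) choose (p + N)))
        = assoc_stirling (p + N) p * (p * (m choose (p + N)) + m * ((m - 1) choose (p + N)))"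
      by (simp only: algebra_simps)
    also have "\<dots> = (m - N) * (assoc_stirling (p + N) p * (m choose (p + N)))"
      by (simp only: choose_absorb_add mult.left_commute)
    finally show "p * assoc_stirling (p + N) p * (m choose (p + N)) + assoc_stirling (p + N) p * (m * ((m - 1) choose (p + N)))
        = (m - N) * (assoc_stirling (p + N) p * (m choose (p + N)))" .
  qed
  finally show ?thesis .
qed

lemma assoc_stirling_sum_eq_Stirling: "assoc_stirling_sum m N = (if N \<le> m then Stirling m (m - N) else 0)"
proof (induction m arbitrary: N)
  case 0
  then show ?case by (simp add: assoc_stirling_sum_0_left)
next
  case (Suc m)
  show ?case
  proof (cases N)
    case 0
    then show ?thesis by (simp add: assoc_stirling_sum_0_right)
  next
    case (Suc N')
    have r: "assoc_stirling_sum (Suc m) N = assoc_stirling_sum m N + (m - N') * assoc_stirling_sum m N'" using assoc_stirling_sum_Suc_Suc Suc by simp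
    show ?thesis
    proof (cases "N' < m")
      case True
      then obtain z where z: "m - N' = Suc z" by (metis Suc_diff_Suc)
      have "Stirling (Suc m) (Suc m - N) = Stirling (Suc m) (Suc z)" using Suc z True by simp
      also have "\<dots> = Suc z * Stirling m (Suc z) + Stirling m z" by simp
      moreover have "m - Suc N' = z" using z by simp
      ultimately show ?thesis using r Suc.IH[of N] Suc.IH[of N'] Suc True z by auto
    next
      case False
      then show ?thesis using r Suc.IH[of N] Suc.IH[of N'] Suc by auto
    qed
  qed
qed

section \<open>Binomial sums\<close>

lemma choose_mult_shift:
  assumes "n \<le> m" "s \<le> j"
  shows "(m choose (n + j - s)) * ((n + j - s) choose (j - s)) = (m choose n) * ((m - n) choose (j - s))"
proof -
  define i where "i = n + j - s"
  have ni: "n \<le> i" "i - n = j - s" using assms by (auto simp: i_def)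
  have "(i choose (j - s)) = (i choose n)"
    using ni by (metis add_diff_cancel_left' binomial_symmetric le_add_diff_inverse)
  moreover have "(m choose i) * (i choose n) = (m choose n) * ((m - n) choose (i - n))"
  proof (cases "i \<le> m")
    case True
    then show ?thesis using choose_mult[OF ni(1) True] by simp
  next
    case False
    then show ?thesis using assms by (simp add: binomial_eq_0)
  qed
  ultimately show ?thesis using ni by (simp add: i_def)
qed

lemma sum_choose_mult_shift:
  "(\<Sum>s\<le>j. (m choose (n + j - s)) * (p choose s) * ((n + j - s) choose (j - s))) = (m choose n) * ((m - n + p) choose j)"
proof (cases "n \<le> m")
  case True
  have "(\<Sum>s\<le>j. (m choose (n + j - s)) * (p choose s) * ((n + j - s) choose (j - s)))
      = (\<Sum>s\<le>j. (m choose n) * ((p choose s) * ((m - n) choose (j - s))))"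
  proof (rule sum.cong[OF refl])
    fix s assume "s \<in> {..j}"
    then have "(m choose (n + j - s)) * ((n + j - s) choose (j - s)) = (m choose n) * ((m - n) choose (j - s))"
      using choose_mult_shift[OF True] by simp
    then show "(m choose (n + j - s)) * (p choose s) * ((n + j - s) choose (j - s)) =
        (m choose n) * ((p choose s) * ((m - n) choose (j - s)))" by (metis mult.assoc mult.commute)
  qed
  also have "\<dots> = (m choose n) * ((p + (m - n)) choose j)"
    by (simp add: sum_distrib_left[symmetric] vandermonde)
  finally show ?thesis by (simp add: add.commute)
next
  case False
  then show ?thesis by (simp add: binomial_eq_0)
qed

lemma sum_choose_mult_choose: "(\<Sum>b\<le>N. (N choose b) * (b choose J)) = (N choose J) * 2 ^ (N - J)"
proof (cases "J \<le> N")
  case True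
  have "(\<Sum>b\<le>N. (N choose b) * (b choose J)) = (\<Sum>b\<in>{J..N}. (N choose b) * (b choose J))"
    by (rule sum.mono_neutral_right) (auto simp: binomial_eq_0)
  also have "\<dots> = (\<Sum>b\<in>{J..N}. (N choose J) * ((N - J) choose (b - J)))"
    by (rule sum.cong[OF refl]) (simp add: choose_mult)
  also have "\<dots> = (N choose J) * (\<Sum>b\<in>{J..N}. ((N - J) choose (b - J)))"
    by (simp add: sum_distrib_left)
  also have "(\<Sum>b\<in>{J..N}. ((N - J) choose (b - J))) = (\<Sum>i\<le>N - J. ((N - J) choose i))"
  proof -
    have "(\<Sum>i\<le>N - J. ((N - J) choose i)) = (\<Sum>b\<in>(\<lambda>i. i + J) ` {..N - J}. ((N - J) choose (b - J)))"
      by (subst sum.reindex) (auto simp: inj_on_def)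
    moreover have "(\<lambda>i. i + J) ` {..N - J} = {J..N}"
    proof -
      have "{..N - J} = {0..N - J}" by auto
      then show ?thesis using True by simp
    qed
    ultimately show ?thesis by simp
  qed
  also have "\<dots> = 2 ^ (N - J)" by (rule choose_row_sum)
  finally show ?thesis .
next
  case False
  then show ?thesis by (simp add: binomial_eq_0)
qed

lemma sum_choose_mult_Suc_choose:
  "(\<Sum>b\<le>N. (N choose b) * (Suc b choose J))
     = (N choose J) * 2 ^ (N - J) + (if J = 0 then 0 else (N choose (J - 1)) * 2 ^ (N - (J - 1)))"
proof (cases J)
  case 0
  then show ?thesis using sum_choose_mult_choose[of N 0] by simp
next
  case (Suc J')
  have "(\<Sum>b\<le>N. (N choose b) * (Suc b choose J))
      = (\<Sum>b\<le>N. (N choose b) * (b choose J)) + (\<Sum>b\<le>N. (N choose b) * (b choose J'))"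
    unfolding Suc by (simp add: sum.distrib algebra_simps)
  then show ?thesis using Suc by (simp only: sum_choose_mult_choose) simp
qed

lemma sum_atLeastAtMost_int_nat: "(\<Sum>d\<in>{0..int n}. g d) = (\<Sum>d\<le>n. g (int d))"
proof -
  have "{0..int n} = int ` {0..n}" by (simp add: image_int_atLeastAtMost)
  moreover have "{0..n} = {..n}" by auto
  ultimately show ?thesis by (simp add: sum.reindex)
qed

lemma sum_swap_triangle:
  fixes f :: "int \<Rightarrow> int \<Rightarrow> 'a::comm_monoid_add"
  shows "(\<Sum>d\<in>{0..n}. \<Sum>i\<in>{d..n}. f d i) = (\<Sum>i\<in>{0..n}. \<Sum>d\<in>{0..i}. f d i)"
proof -
  have "(\<Sum>d\<in>{0..n}. \<Sum>i\<in>{d..n}. f d i) = (\<Sum>d\<in>{0..n}. \<Sum>i\<in>{0..n}. if d \<le> i then f d i else 0)"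
  proof (rule sum.cong[OF refl])
    fix d assume "d \<in> {0..n}"
    then have e: "{d..n} = {i\<in>{0..n}. d \<le> i}" by auto
    show "(\<Sum>i\<in>{d..n}. f d i) = (\<Sum>i\<in>{0..n}. if d \<le> i then f d i else 0)"
      by (subst e, rule sum.inter_filter, simp)
  qed
  also have "\<dots> = (\<Sum>i\<in>{0..n}. \<Sum>d\<in>{0..n}. if d \<le> i then f d i else 0)"
    by (rule sum.swap)
  also have "\<dots> = (\<Sum>i\<in>{0..n}. \<Sum>d\<in>{0..i}. f d i)"
  proof (rule sum.cong[OF refl])
    fix i assume "i \<in> {0..n}"
    then have e: "{0..i} = {d\<in>{0..n}. d \<le> i}" by auto
    show "(\<Sum>d\<in>{0..n}. if d \<le> i then f d i else 0) = (\<Sum>d\<in>{0..i}. f d i)"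
      by (subst e, rule sum.inter_filter[symmetric], simp)
  qed
  finally show ?thesis .
qed

lemma sum_stirling_power_eq_choose:
  "(\<Sum>d\<le>n. (-1) ^ (n - d) / fact n * real (stirling n d) * real m ^ d) = real (m choose n)"
proof -
  have "(\<Sum>d\<le>n. (-1) ^ (n - d) / fact n * real (stirling n d) * real m ^ d)
      = (-1) ^ n / fact n * (\<Sum>d\<le>n. real (stirling n d) * (- real m) ^ d)"
  proof -
    have "(-1::real) ^ (n - d) * real m ^ d = (-1) ^ n * (- real m) ^ d" if "d \<le> n" for d
    proof -
      have "(-1::real) ^ n = (-1) ^ (n - d) * (-1) ^ d" using that by (simp flip: power_add)
      then have "(-1::real) ^ n * (- real m) ^ d = (-1) ^ (n - d) * ((-1) ^ d * (-1) ^ d) * real m ^ d"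
        by (simp add: power_minus[of "real m"] mult_ac)
      also have "(-1::real) ^ d * (-1) ^ d = 1" by (simp flip: power_add)
      finally show ?thesis by simp
    qed
    then show ?thesis by (simp add: sum_distrib_left mult_ac)
  qed
  also have "(\<Sum>d\<le>n. real (stirling n d) * (- real m) ^ d) = pochhammer (- real m) n"
    by (rule stirling_pochhammer)
  also have "(-1) ^ n / fact n * pochhammer (- real m) n = real m gchoose n"
    by (simp add: gbinomial_pochhammer)
  also have "\<dots> = real (m choose n)" by (simp add: binomial_gbinomial)
  finally show ?thesis .
qed

lemma sum_choose_triple:
  "(\<Sum>b\<le>J. (P choose b) * (KK choose (J - b)) * (b choose S)) =
     (if S \<le> J then (P choose S) * ((P - S + KK) choose (J - S)) else 0)"
proof (cases "S \<le> J")
  case True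
  have "(\<Sum>b\<le>J. (P choose b) * (KK choose (J - b)) * (b choose S))
      = (\<Sum>b\<in>{S..J}. (P choose b) * (KK choose (J - b)) * (b choose S))"
    by (rule sum.mono_neutral_right) (auto simp: binomial_eq_0)
  also have "\<dots> = (\<Sum>b\<in>{S..J}. (P choose S) * (((P - S) choose (b - S)) * (KK choose (J - b))))"
  proof (rule sum.cong[OF refl])
    fix b assume b: "b \<in> {S..J}"
    have "(P choose b) * (b choose S) = (P choose S) * ((P - S) choose (b - S))"
    proof (cases "b \<le> P")
      case True
      then show ?thesis using b choose_mult[of S b P] by simp
    next
      case False
      then show ?thesis using b by (simp add: binomial_eq_0) arith
    qed
    then show "(P choose b) * (KK choose (J - b)) * (b choose S) = (P choose S) * (((P - S) choose (b - S)) * (KK choose (J - b)))"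
      by (metis mult.assoc mult.commute)
  qed
  also have "\<dots> = (P choose S) * (\<Sum>t\<le>J - S. ((P - S) choose t) * (KK choose ((J - S) - t)))"
  proof -
    have "(\<Sum>b\<in>{S..J}. ((P - S) choose (b - S)) * (KK choose (J - b))) =
          (\<Sum>t\<le>J - S. ((P - S) choose t) * (KK choose ((J - S) - t)))"
    proof -
      have "{..J - S} = {0..J - S}" by auto
      then have img: "(\<lambda>t. t + S) ` {..J - S} = {S..J}" using True by simp
      define g where "g b = ((P - S) choose (b - S)) * (KK choose (J - b))" for b
      have "(\<Sum>b\<in>{S..J}. g b) = (\<Sum>b\<in>(\<lambda>t. t + S) ` {..J - S}. g b)" using img by simp
      also have "\<dots> = (\<Sum>t\<le>J - S. g (t + S))" by (subst sum.reindex) (auto simp: inj_on_def)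
      also have "\<dots> = (\<Sum>t\<le>J - S. ((P - S) choose t) * (KK choose ((J - S) - t)))"
        by (rule sum.cong[OF refl]) (simp add: g_def ac_simps)
      finally show ?thesis by (simp add: g_def)
    qed
    then show ?thesis by (simp only: sum_distrib_left[symmetric])
  qed
  also have "\<dots> = (P choose S) * ((P - S + KK) choose (J - S))" by (simp only: vandermonde)
  finally show ?thesis using True by simp
next
  case False
  then show ?thesis by (auto intro!: sum.neutral simp: binomial_eq_0)
qed

section \<open>The polynomial with coefficients c_d\<close>

definition coeff_inner :: "nat \<Rightarrow> int \<Rightarrow> real" where
  "coeff_inner k i = (\<Sum>j\<in>{0..U i (int k)}. alpha (int k) j *
       (\<Sum>p\<in>{L i (int k)..int k - j}. real (assoc_stirling (nat (p + int k - j)) (nat p)) *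
         (\<Sum>b\<in>{0..j}. kbinom p b * kbinom (int k) (j - b) * kbinom b (int k + p - i))))"

lemma c_coef_poly_eq_choose_sum: "(\<Sum>d\<in>{0..2 * int k}. c_coef d (int k) * real m ^ nat d) =
   (\<Sum>i\<in>{0..2 * int k}. real (m choose nat i) * coeff_inner k i)"
proof -
  define cf where "cf i d = (-1) ^ nat (i - d) / fact (nat i) * real (stirling (nat i) (nat d))" for i d :: int
  have cc: "c_coef d (int k) = (\<Sum>i\<in>{d..2 * int k}. cf i d * coeff_inner k i)" for d
    unfolding c_coef_def cf_def coeff_inner_def by (simp add: mult.assoc)
  have "(\<Sum>d\<in>{0..2 * int k}. c_coef d (int k) * real m ^ nat d) =
      (\<Sum>d\<in>{0..2 * int k}. \<Sum>i\<in>{d..2 * int k}. cf i d * real m ^ nat d * coeff_inner k i)"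
    unfolding cc sum_distrib_right by (intro sum.cong refl) (simp add: mult_ac)
  also have "\<dots> = (\<Sum>i\<in>{0..2 * int k}. \<Sum>d\<in>{0..i}. cf i d * real m ^ nat d * coeff_inner k i)"
    by (rule sum_swap_triangle)
  also have "\<dots> = (\<Sum>i\<in>{0..2 * int k}. real (m choose nat i) * coeff_inner k i)"
  proof (rule sum.cong[OF refl])
    fix i assume "i \<in> {0..2 * int k}"
    then have i0: "0 \<le> i" by simp
    have "(\<Sum>d\<in>{0..i}. cf i d * real m ^ nat d) = (\<Sum>d\<in>{0..int (nat i)}. cf i d * real m ^ nat d)"
      using i0 by simp
    also have "\<dots> = (\<Sum>d\<le>nat i. cf i (int d) * real m ^ nat (int d))"
      by (rule sum_atLeastAtMost_int_nat)
    also have "\<dots> = (\<Sum>d\<le>nat i. (-1) ^ (nat i - d) / fact (nat i) * real (stirling (nat i) d) * real m ^ d)"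
      by (rule sum.cong[OF refl]) (use i0 in \<open>simp add: cf_def nat_diff_distrib'\<close>)
    also have "\<dots> = real (m choose nat i)" by (rule sum_stirling_power_eq_choose)
    finally show "(\<Sum>d\<in>{0..i}. cf i d * real m ^ nat d * coeff_inner k i) = real (m choose nat i) * coeff_inner k i"
      by (simp add: sum_distrib_right[symmetric])
  qed
  finally show ?thesis .
qed

lemma kbinom_of_nat: "kbinom (int a) (int b) = real (a choose b)"
  by (simp add: kbinom_def binomial_gbinomial)

lemma kbinom_neg_right: "0 \<le> n \<Longrightarrow> r < 0 \<Longrightarrow> kbinom n r = 0"
  by (simp add: kbinom_def)

lemma kbinom_eq_0_large: "0 \<le> n \<Longrightarrow> n < r \<Longrightarrow> kbinom n r = 0"
proof -
  assume "0 \<le> n" "n < r"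
  then obtain a b where "n = int a" "r = int b" "a < b" by (metis nonneg_eq_int order.strict_trans1 zless_nat_conj nat_int less_imp_le)
  then show ?thesis by (simp add: kbinom_of_nat binomial_eq_0)
qed

lemma alpha_eq_0:
  assumes "0 \<le> k" "\<lceil>real_of_int k / 2\<rceil> < j" "j \<le> k"
  shows "alpha k j = 0"
proof -
  have "2 * j \<ge> k + 2"
  proof -
    have "real_of_int k / 2 \<le> of_int \<lceil>real_of_int k / 2\<rceil>" by (rule le_of_int_ceiling)
    moreover have "of_int \<lceil>real_of_int k / 2\<rceil> \<le> real_of_int j - 1" using assms(2) by linarith
    ultimately have "real_of_int k \<le> 2 * real_of_int j - 2" by linarith
    then show ?thesis by linarith
  qed
  then have "kbinom (k - j) (j - 1) = 0" "kbinom (k - j + 1) j = 0"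
    using assms by (auto intro!: kbinom_eq_0_large)
  then show ?thesis by (simp add: alpha_def)
qed

definition binom_pair :: "nat \<Rightarrow> int \<Rightarrow> int \<Rightarrow> int \<Rightarrow> real" where
  "binom_pair k p j i = (if 0 \<le> int k + p - i \<and> int k + p - i \<le> j then
     real ((nat p choose nat (int k + p - i)) * (nat i choose nat (j - (int k + p - i)))) else 0)"

lemma sum_kbinom_triple:
  assumes p0: "0 \<le> p" and j0: "0 \<le> j" and i0: "0 \<le> i"
  shows "(\<Sum>b\<in>{0..j}. kbinom p b * kbinom (int k) (j - b) * kbinom b (int k + p - i)) = binom_pair k p j i"
proof -
  obtain P J where PJ: "p = int P" "j = int J" using p0 j0 by (metis nonneg_eq_int)
  define S' where "S' = int k + p - i"
  have "(\<Sum>b\<in>{0..j}. kbinom p b * kbinom (int k) (j - b) * kbinom b S')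
      = (\<Sum>b\<le>J. kbinom (int P) (int b) * kbinom (int k) (int J - int b) * kbinom (int b) S')"
    unfolding PJ by (rule sum_atLeastAtMost_int_nat)
  also have "\<dots> = (\<Sum>b\<le>J. real ((P choose b) * (k choose (J - b))) * kbinom (int b) S')"
    by (rule sum.cong[OF refl]) (simp add: kbinom_of_nat of_nat_diff[symmetric] del: of_nat_diff)
  finally have e1: "(\<Sum>b\<in>{0..j}. kbinom p b * kbinom (int k) (j - b) * kbinom b S') =
      (\<Sum>b\<le>J. real ((P choose b) * (k choose (J - b))) * kbinom (int b) S')" .
  show ?thesis
  proof (cases "S' < 0")
    case True
    then have "kbinom (int b) S' = 0" for b by (simp add: kbinom_neg_right)
    then show ?thesis using e1 True by (simp add: binom_pair_def S'_def)
  next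
    case False
    then obtain S where S: "S' = int S" by (metis nonneg_eq_int not_less)
    have "(\<Sum>b\<le>J. real ((P choose b) * (k choose (J - b))) * kbinom (int b) S')
        = real (\<Sum>b\<le>J. (P choose b) * (k choose (J - b)) * (b choose S))"
      unfolding S by (simp add: kbinom_of_nat)
    also have "\<dots> = real (if S \<le> J then (P choose S) * ((P - S + k) choose (J - S)) else 0)"
      by (simp only: sum_choose_triple)
    also have "\<dots> = binom_pair k p j i"
    proof (cases "S \<le> J")
      case True
      have ni: "nat i = P - S + k \<or> (P choose S) = 0"
      proof (cases "S \<le> P")
        case True
        then show ?thesis using S PJ i0 unfolding S'_def by auto
      next
        case False
        then show ?thesis by (simp add: binomial_eq_0)
      qed
      have "nat (j - (int k + p - i)) = J - S" using S PJ True unfolding S'_def by auto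
      moreover have "nat (int k + p - i) = S" using S unfolding S'_def by auto
      ultimately show ?thesis using True ni S PJ unfolding binom_pair_def S'_def by auto
    next
      case False
      then show ?thesis using S PJ unfolding binom_pair_def S'_def by auto
    qed
    finally show ?thesis using e1 by (simp add: S'_def)
  qed
qed

text \<open>The truncations U and L in the definition of c_d only drop vanishing terms.\<close>

lemma coeff_inner_eq:
  assumes i: "0 \<le> i" "i \<le> 2 * int k"
  shows "coeff_inner k i = (\<Sum>j\<in>{0..int k}. alpha (int k) j *
     (\<Sum>p\<in>{0..int k - j}. real (assoc_stirling (nat (p + int k - j)) (nat p)) * binom_pair k p j i))"
proof -
  define K where "K = int k"
  define A where "A j p = real (assoc_stirling (nat (p + K - j)) (nat p))" for j p
  have "coeff_inner k i = (\<Sum>j\<in>{0..U i K}. alpha K j * (\<Sum>p\<in>{L i K..K - j}. A j p *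
      (\<Sum>b\<in>{0..j}. kbinom p b * kbinom K (j - b) * kbinom b (K + p - i))))"
    unfolding coeff_inner_def K_def A_def ..
  also have "\<dots> = (\<Sum>j\<in>{0..U i K}. alpha K j * (\<Sum>p\<in>{L i K..K - j}. A j p * binom_pair k p j i))"
    using i(1) by (auto intro!: sum.cong simp: sum_kbinom_triple L_def K_def)
  also have "\<dots> = (\<Sum>j\<in>{0..U i K}. alpha K j * (\<Sum>p\<in>{0..K - j}. A j p * binom_pair k p j i))"
    by (intro sum.cong refl arg_cong2[where f = times] sum.mono_neutral_left)
      (auto simp: L_def binom_pair_def K_def)
  also have "\<dots> = (\<Sum>j\<in>{0..K}. alpha K j * (\<Sum>p\<in>{0..K - j}. A j p * binom_pair k p j i))"
  proof (rule sum.mono_neutral_left)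
    have "\<lceil>real_of_int K / 2\<rceil> \<le> K" by (simp add: ceiling_le_iff K_def)
    then show "{0..U i K} \<subseteq> {0..K}" by (auto simp: U_def)
    show "\<forall>j\<in>{0..K} - {0..U i K}. alpha K j * (\<Sum>p\<in>{0..K - j}. A j p * binom_pair k p j i) = 0"
    proof
      fix j assume "j \<in> {0..K} - {0..U i K}"
      then have "\<lceil>real_of_int K / 2\<rceil> < j \<or> 2 * K - i < j" "j \<le> K" by (auto simp: U_def)
      then show "alpha K j * (\<Sum>p\<in>{0..K - j}. A j p * binom_pair k p j i) = 0"
        using alpha_eq_0[of K j] by (auto simp: K_def binom_pair_def)
    qed
  qed simp
  finally show ?thesis unfolding K_def A_def .
qed

lemma sum_choose_binom_pair:
  assumes j: "0 \<le> j" "j \<le> int k" and p: "0 \<le> p" "p \<le> int k - j"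
  shows "(\<Sum>i\<in>{0..2 * int k}. real (m choose nat i) * binom_pair k p j i) =
         real ((m choose nat (p + int k - j)) * ((m - nat (int k - j)) choose nat j))"
proof -
  define K where "K = int k"
  define g where "g i = real (m choose nat i) * binom_pair k p j i" for i
  obtain P J where PJ: "p = int P" "j = int J" using p j by (metis nonneg_eq_int)
  have JK: "J \<le> k" "P + J \<le> k" using j p PJ by auto
  have "(\<Sum>i\<in>{0..2 * K}. g i) = (\<Sum>i\<in>{K + p - j..K + p}. g i)"
  proof (rule sum.mono_neutral_right)
    show "{K + p - j..K + p} \<subseteq> {0..2 * K}" using j p K_def by auto
    show "\<forall>i\<in>{0..2 * K} - {K + p - j..K + p}. g i = 0"
      by (auto simp: g_def binom_pair_def K_def)
  qed simp
  also have "\<dots> = (\<Sum>s\<in>{0..j}. g (K + p - s))"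
    by (rule sum.reindex_bij_witness[where i = "\<lambda>i. K + p - i" and j = "\<lambda>s. K + p - s"]) auto
  also have "\<dots> = (\<Sum>S\<le>J. g (K + p - int S))"
    unfolding PJ(2) by (rule sum_atLeastAtMost_int_nat)
  also have "\<dots> = real (\<Sum>S\<le>J. (m choose ((P + k - J) + J - S)) * (P choose S) * (((P + k - J) + J - S) choose (J - S)))"
  proof -
    have "g (K + p - int S) = real ((m choose ((P + k - J) + J - S)) * (P choose S) * (((P + k - J) + J - S) choose (J - S)))"
      if "S \<le> J" for S
    proof -
      have e1: "nat (K + p - int S) = (P + k - J) + J - S" using that JK PJ K_def by auto
      have e2: "nat (j - int S) = J - S" using that PJ by auto
      show ?thesis using that PJ unfolding g_def binom_pair_def K_def e1[unfolded K_def]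
        by (simp add: e2 nat_diff_distrib')
    qed
    then show ?thesis by simp
  qed
  also have "\<dots> = real ((m choose (P + k - J)) * ((m - (P + k - J) + P) choose J))"
    by (simp only: sum_choose_mult_shift)
  also have "\<dots> = real ((m choose nat (p + int k - j)) * ((m - nat (int k - j)) choose nat j))"
  proof (cases "P + k - J \<le> m")
    case True
    have "m - (P + k - J) + P = m - (k - J)" using True JK by auto
    moreover have "nat (p + int k - j) = P + k - J" "nat (int k - j) = k - J" "nat j = J" using PJ JK by auto
    ultimately show ?thesis by simp
  next
    case False
    moreover have "nat (p + int k - j) = P + k - J" using PJ JK by auto
    ultimately show ?thesis by (simp add: binomial_eq_0)
  qed
  finally show ?thesis unfolding g_def K_def .
qed

lemma c_coef_poly_eq:
  "(\<Sum>d\<in>{0..2 * int k}. c_coef d (int k) * real m ^ nat d) =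
   (\<Sum>j\<in>{0..int k}. alpha (int k) j * real ((m - nat (int k - j)) choose nat j) * real (assoc_stirling_sum m (nat (int k - j))))"
proof -
  define K where "K = int k"
  define A where "A j p = real (assoc_stirling (nat (p + K - j)) (nat p))" for j p
  define c where "c i = real (m choose nat i)" for i
  have "(\<Sum>d\<in>{0..2 * int k}. c_coef d (int k) * real m ^ nat d) = (\<Sum>i\<in>{0..2 * K}. c i * coeff_inner k i)"
    unfolding c_coef_poly_eq_choose_sum K_def c_def ..
  also have "\<dots> = (\<Sum>i\<in>{0..2 * K}. c i * (\<Sum>j\<in>{0..K}. alpha K j * (\<Sum>p\<in>{0..K - j}. A j p * binom_pair k p j i)))"
    by (rule sum.cong[OF refl]) (simp add: coeff_inner_eq K_def A_def)
  also have "\<dots> = (\<Sum>i\<in>{0..2 * K}. \<Sum>j\<in>{0..K}. \<Sum>p\<in>{0..K - j}. alpha K j * (A j p * (c i * binom_pair k p j i)))"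
    by (simp add: sum_distrib_left mult_ac)
  also have "\<dots> = (\<Sum>j\<in>{0..K}. \<Sum>i\<in>{0..2 * K}. \<Sum>p\<in>{0..K - j}. alpha K j * (A j p * (c i * binom_pair k p j i)))"
    by (rule sum.swap)
  also have "\<dots> = (\<Sum>j\<in>{0..K}. \<Sum>p\<in>{0..K - j}. \<Sum>i\<in>{0..2 * K}. alpha K j * (A j p * (c i * binom_pair k p j i)))"
    by (rule sum.cong[OF refl]) (rule sum.swap)
  also have "\<dots> = (\<Sum>j\<in>{0..K}. alpha K j * (\<Sum>p\<in>{0..K - j}. A j p * (\<Sum>i\<in>{0..2 * K}. c i * binom_pair k p j i)))"
    by (simp add: sum_distrib_left)
  also have "\<dots> = (\<Sum>j\<in>{0..K}. alpha K j * (\<Sum>p\<in>{0..K - j}. A j p *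
        real ((m choose nat (p + K - j)) * ((m - nat (K - j)) choose nat j))))"
    by (intro sum.cong refl arg_cong2[where f = times]) (auto simp: K_def c_def sum_choose_binom_pair)
  also have "\<dots> = (\<Sum>j\<in>{0..K}. alpha K j * real ((m - nat (K - j)) choose nat j) * real (assoc_stirling_sum m (nat (K - j))))"
  proof (rule sum.cong[OF refl])
    fix j assume j: "j \<in> {0..K}"
    define N where "N = nat (K - j)"
    have KjN: "K - j = int N" using j by (simp add: N_def)
    have "(\<Sum>p\<in>{0..K - j}. A j p * real ((m choose nat (p + K - j)) * ((m - nat (K - j)) choose nat j)))
        = (\<Sum>q\<le>N. A j (int q) * real ((m choose nat (int q + K - j)) * ((m - N) choose nat j)))"
      unfolding KjN nat_int by (rule sum_atLeastAtMost_int_nat)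
    also have "\<dots> = real ((m - N) choose nat j) * real (assoc_stirling_sum m N)"
    proof -
      have "nat (int q + K - j) = q + N" for q using KjN by auto
      then show ?thesis by (simp add: assoc_stirling_sum_def A_def sum_distrib_left mult_ac)
    qed
    finally show "alpha K j * (\<Sum>p\<in>{0..K - j}. A j p * real ((m choose nat (p + K - j)) * ((m - nat (K - j)) choose nat j))) =
        alpha K j * real ((m - nat (K - j)) choose nat j) * real (assoc_stirling_sum m (nat (K - j)))"
      by (simp add: N_def)
  qed
  finally show ?thesis unfolding K_def .
qed

section \<open>The weights alpha\<close>

lemma sum_atMost_reflect:
  fixes g :: "nat \<Rightarrow> 'a::comm_monoid_add"
  shows "(\<Sum>i\<le>k. g (k - i)) = (\<Sum>i\<le>k. g i)"
  using sum.nat_diff_reindex[of g "Suc k"] by (simp add: lessThan_Suc_atMost)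

lemma sum_binom_weight_nat:
  assumes "J \<le> k"
  shows "(\<Sum>a\<le>k. binom_weight 1 (int a) (int (k - a)) (int J)) = int ((k - J choose J) * 2 ^ (k - J - J) +
      (if J = 0 then 0 else (k - J choose (J - 1)) * 2 ^ (k - J - (J - 1))))"
proof -
  define N where "N = k - J"
  have "(\<Sum>a\<le>k. binom_weight 1 (int a) (int (k - a)) (int J)) =
      (\<Sum>a\<le>k. int (if J \<le> a then (k - J choose (a - J)) * (Suc (k - a) choose J) else 0))"
  proof (rule sum.cong[OF refl])
    fix a assume "a \<in> {..k}"
    then have "a + (k - a) - J = k - J" by simp
    then show "binom_weight 1 (int a) (int (k - a)) (int J) = int (if J \<le> a then (k - J choose (a - J)) * (Suc (k - a) choose J) else 0)"
      by (simp add: binom_weight_nat)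
  qed
  also have "\<dots> = (\<Sum>b\<le>k. int (if J \<le> k - b then (k - J choose (k - b - J)) * (Suc b choose J) else 0))"
  proof -
    have "(\<Sum>b\<le>k. int (if J \<le> k - b then (k - J choose (k - b - J)) * (Suc (k - (k - b)) choose J) else 0)) =
        (\<Sum>a\<le>k. int (if J \<le> a then (k - J choose (a - J)) * (Suc (k - a) choose J) else 0))"
      by (rule sum_atMost_reflect)
    moreover have "(\<Sum>b\<le>k. int (if J \<le> k - b then (k - J choose (k - b - J)) * (Suc (k - (k - b)) choose J) else 0)) =
        (\<Sum>b\<le>k. int (if J \<le> k - b then (k - J choose (k - b - J)) * (Suc b choose J) else 0))"
      by (rule sum.cong[OF refl]) auto
    ultimately show ?thesis by simp
  qed
  also have "\<dots> = (\<Sum>b\<le>N. int ((N choose b) * (Suc b choose J)))"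
  proof -
    have "(\<Sum>b\<le>k. int (if J \<le> k - b then (k - J choose (k - b - J)) * (Suc b choose J) else 0)) =
        (\<Sum>b\<le>N. int (if J \<le> k - b then (k - J choose (k - b - J)) * (Suc b choose J) else 0))"
      by (rule sum.mono_neutral_right) (auto simp: N_def)
    also have "\<dots> = (\<Sum>b\<le>N. int ((N choose b) * (Suc b choose J)))"
    proof (rule sum.cong[OF refl])
      fix b assume "b \<in> {..N}"
      then have "b \<le> N" by simp
      then have "J \<le> k - b" "k - b - J = N - b" using assms by (auto simp: N_def)
      moreover have "(N choose (N - b)) = (N choose b)" using \<open>b \<le> N\<close> by (rule binomial_symmetric[symmetric])
      ultimately show "int (if J \<le> k - b then (k - J choose (k - b - J)) * (Suc b choose J) else 0) = int ((N choose b) * (Suc b choose J))"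
        by (simp add: N_def)
    qed
    finally show ?thesis .
  qed
  also have "\<dots> = int ((N choose J) * 2 ^ (N - J) + (if J = 0 then 0 else (N choose (J - 1)) * 2 ^ (N - (J - 1))))"
    by (simp only: of_nat_sum[symmetric] sum_choose_mult_Suc_choose)
  finally show ?thesis by (simp add: N_def)
qed

lemma sum_binom_weight_eq_alpha:
  assumes "J \<le> k"
  shows "real_of_int (\<Sum>a\<le>k. binom_weight 1 (int a) (int (k - a)) (int J)) = alpha (int k) (int J) / fact J"
proof -
  define N where "N = k - J"
  have kNJ: "k = N + J" using assms by (simp add: N_def)
  have lhs: "real_of_int (\<Sum>a\<le>k. binom_weight 1 (int a) (int (k - a)) (int J)) =
      real (N choose J) * 2 ^ (N - J) + (if J = 0 then 0 else real (N choose (J - 1)) * 2 ^ (N - (J - 1)))"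
    unfolding sum_binom_weight_nat[OF assms] N_def by simp
  have al: "alpha (int k) (int J) / fact J = 2 powi (int k - 2 * int J) * (kbinom (int N) (int J - 1) + kbinom (int N + 1) (int J))"
    unfolding alpha_def using kNJ by (simp add: of_nat_diff)
  show ?thesis
  proof (cases J)
    case 0
    have "kbinom (int N + 1) 0 = 1" by (simp add: kbinom_def)
    then show ?thesis using lhs al kNJ 0 by (simp add: kbinom_neg_right)
  next
    case (Suc J')
    have kb1: "kbinom (int N) (int J - 1) = real (N choose J')" using Suc kbinom_of_nat by simp
    have kb2: "kbinom (int N + 1) (int J) = real (N choose J') + real (N choose J)"
      using Suc kbinom_of_nat[of "Suc N" J] by (simp add: add.commute)
    have "real (N choose J) * 2 ^ (N - J) + real (N choose J') * 2 ^ (N - J')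
        = 2 powi (int k - 2 * int J) * (2 * real (N choose J') + real (N choose J))"
    proof (cases "J \<le> N")
      case True
      have e1: "(2::real) ^ (N - J) = 2 powi (int k - 2 * int J)"
        using True kNJ by (simp add: power_int_def nat_diff_distrib)
      have h: "N - J' = Suc (N - J)" using True Suc by simp
      have e2: "(2::real) ^ (N - J') = 2 * 2 powi (int k - 2 * int J)"
        unfolding h using e1 by simp
      show ?thesis unfolding e1 e2 by (simp add: algebra_simps)
    next
      case False
      then have cJ: "N choose J = 0" by (simp add: binomial_eq_0)
      show ?thesis
      proof (cases "J' = N")
        case True
        then have "int k - 2 * int J = -1" using kNJ Suc by simp
        then show ?thesis using cJ True by (simp add: power_int_minus)
      next
        case False
        then have "N choose J' = 0" using \<open>\<not> J \<le> N\<close> Suc by (simp add: binomial_eq_0)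
        then show ?thesis using cJ \<open>\<not> J \<le> N\<close> False Suc by (simp add: binomial_eq_0)
      qed
    qed
    then show ?thesis using lhs al kb1 kb2 Suc by simp
  qed
qed

lemma A_S_closed_form:
  "real (A_S m k) = (\<Sum>j\<in>{0..int k}. alpha (int k) j * real ((m - nat (int k - j)) choose nat j)
      * real (assoc_stirling_sum m (nat (int k - j))))"
proof -
  define K where "K = int k"
  define w where "w j = real_of_int (\<Sum>a\<le>k. binom_weight 1 (int a) (int (k - a)) j)" for j
  define T where "T j = w j * real_of_int (stirling_ffact m (K - j) j)" for j
  have "real (A_S m k) = (\<Sum>a\<le>k. real_of_int (int (pair_weight_sum {1..int m} 1 a (k - a))))"
    by (simp add: A_S_eq_sum_pair_weight_sum)
  also have "\<dots> = (\<Sum>a\<le>k. real_of_int (weight_rec m 1 (int a) (int (k - a))))"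
    by (simp only: pair_weight_sum_eq_weight_rec[of "{1..int m}", simplified])
  also have "\<dots> = (\<Sum>a\<le>k. \<Sum>j\<in>{0..int m}. real_of_int (binom_weight 1 (int a) (int (k - a)) j)
      * real_of_int (stirling_ffact m (K - j) j))"
  proof (rule sum.cong[OF refl])
    fix a assume "a \<in> {..k}"
    then have "int a + int (k - a) = K" by (simp add: K_def)
    then show "real_of_int (weight_rec m 1 (int a) (int (k - a))) = (\<Sum>j\<in>{0..int m}.
        real_of_int (binom_weight 1 (int a) (int (k - a)) j) * real_of_int (stirling_ffact m (K - j) j))"
      unfolding weight_rec_closed_form by simp
  qed
  also have "\<dots> = (\<Sum>j\<in>{0..int m}. T j)"
    unfolding T_def w_def by (subst sum.swap) (simp add: sum_distrib_right)
  also have "\<dots> = (\<Sum>j\<in>{0..int m + K}. T j)"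
    by (rule sum.mono_neutral_left) (auto simp: T_def stirling_ffact_eq_0_large K_def)
  also have "\<dots> = (\<Sum>j\<in>{0..K}. T j)"
    by (rule sum.mono_neutral_right) (auto simp: T_def stirling_ffact_eq_0_neg K_def)
  also have "\<dots> = (\<Sum>j\<in>{0..K}. alpha K j * real ((m - nat (K - j)) choose nat j) * real (assoc_stirling_sum m (nat (K - j))))"
  proof (rule sum.cong[OF refl])
    fix j assume j: "j \<in> {0..K}"
    then obtain J where J: "j = int J" "J \<le> k" by (metis K_def atLeastAtMost_iff nonneg_eq_int of_nat_le_iff)
    define N where "N = k - J"
    have KJ: "K - j = int N" "nat (K - j) = N" using J by (auto simp: K_def N_def)
    have wJ: "w j = alpha K j / fact J" unfolding w_def J K_def using sum_binom_weight_eq_alpha[OF J(2)] by simp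
    have "real_of_int (stirling_ffact m (int N) (int J)) = real (assoc_stirling_sum m N) * real ((m - N) choose J) * fact J"
      by (simp add: stirling_ffact_def assoc_stirling_sum_eq_Stirling falling_fact_def)
    then have "real_of_int (stirling_ffact m (K - j) j) = real (assoc_stirling_sum m N) * real ((m - N) choose J) * fact J"
      using KJ(1) J(1) by simp
    then show "T j = alpha K j * real ((m - nat (K - j)) choose nat j) * real (assoc_stirling_sum m (nat (K - j)))"
      unfolding T_def wJ KJ(2) using J by simp
  qed
  finally show ?thesis unfolding K_def .
qed

theorem theorem3p3:
  fixes m k :: nat
  shows "real (A_S m k) = (\<Sum>d\<in>{0..2 * int k}. c_coef d (int k) * real m ^ nat d)"
  unfolding A_S_closed_form c_coef_poly_eq ..

end
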